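(* For every function $m\in W^{1,2}(0,1)$ and every $\nu>0$, $$\int_0^1 e^{2m}\,dx\le \frac{1+\nu}{4}\Big(\int_0^1 e^m\,dx\Big)^2\int_0^1|m_x|^2\,dx+\Big(1+\frac1\nu\Big)\Big(\int_0^1 e^m\,dx\Big)^2.$$ *)

theory Defs
  imports "HOL-Analysis.Analysis"
begin

definition smooth_fun :: "(real \<Rightarrow> real) \<Rightarrow> bool" where
  "smooth_fun \<phi> \<longleftrightarrow> (\<forall>k x. ((deriv ^^ k) \<phi>) differentiable (at x))"

definition test_fun01 :: "(real \<Rightarrow> real) \<Rightarrow> bool" where
  "test_fun01 \<phi> \<longleftrightarrow> smooth_fun \<phi> \<and>
     (\<exists>a b. 0 < a \<and> b < 1 \<and> (\<forall>x. x \<notin> {a..b} \<longrightarrow> \<phi> x = 0))"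

definition L2_01 :: "(real \<Rightarrow> real) \<Rightarrow> bool" where
  "L2_01 f \<longleftrightarrow> set_borel_measurable lborel {0<..<1} f \<and>
     set_integrable lborel {0<..<1} (\<lambda>x. (f x)\<^sup>2)"

definition W12_01 :: "(real \<Rightarrow> real) \<Rightarrow> (real \<Rightarrow> real) \<Rightarrow> bool" where
  "W12_01 m g \<longleftrightarrow> L2_01 m \<and> L2_01 g \<and>
     (\<forall>\<phi>. test_fun01 \<phi> \<longrightarrow>
        (LINT x:{0<..<1}|lborel. m x * deriv \<phi> x) = - (LINT x:{0<..<1}|lborel. g x * \<phi> x))"

end

theory Submission
  imports Defs "HOL-Computational_Algebra.Polynomial"
begin

text \<open>
  The weak derivative determines m up to a constant: testing against smooth bumps
  (du Bois-Reymond) gives m = u almost everywhere on (0,1) with u(x) = C + int_0^x g.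
  For q = exp(u/2) the chain rule gives |q(y) - q(x)| <= 1/2 int |g| q, which by
  Cauchy-Schwarz is at most 1/2 ||g||_2 ||q||_2, and ||q||_2^2 = M := int exp u.
  So q(x) - ||g||_2 sqrt M / 2 <= q(y) for all y; squaring and averaging over y shows
  that it is at most sqrt M, i.e. exp(u(x)) <= M (1 + ||g||_2 / 2)^2 pointwise.
  Integrating exp(2u) = exp u * exp u then gives int exp(2u) <= M^2 (1 + ||g||_2 / 2)^2,
  and the cross term is split by ||g||_2 <= nu ||g||_2^2 / 4 + 1 / nu.
\<close>

section \<open>Infinitely differentiable functions\<close>

definition infinitely_differentiable :: "(real \<Rightarrow> real) \<Rightarrow> bool" where
  "infinitely_differentiable f \<longleftrightarrow>
     (\<exists>D. D 0 = f \<and> (\<forall>k x. (D k has_real_derivative D (Suc k) x) (at x)))"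

lemma infinitely_differentiable_imp_smooth_fun:
  assumes "infinitely_differentiable f"
  shows "smooth_fun f"
proof -
  obtain D where D: "D 0 = f" "\<And>k x. (D k has_real_derivative D (Suc k) x) (at x)"
    using assms unfolding infinitely_differentiable_def by blast
  have "(deriv ^^ k) f = D k" for k
  proof (induction k)
    case (Suc k)
    have "deriv (D k) = D (Suc k)"
      using D(2) DERIV_imp_deriv by blast
    then show ?case using Suc by simp
  qed (simp add: D(1))
  then show ?thesis
    unfolding smooth_fun_def using D(2) real_differentiable_def by metis
qed

lemma infinitely_differentiable_cmult:
  assumes "infinitely_differentiable f"
  shows "infinitely_differentiable (\<lambda>x. c * f x)"
proof -
  obtain D where D: "D 0 = f" "\<And>k x. (D k has_real_derivative D (Suc k) x) (at x)"
    using assms unfolding infinitely_differentiable_def by blast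
  show ?thesis unfolding infinitely_differentiable_def
    by (intro exI[of _ "\<lambda>k x. c * D k x"]) (auto simp: D(1) intro!: DERIV_cmult D(2))
qed

lemma infinitely_differentiable_diff:
  assumes "infinitely_differentiable f" "infinitely_differentiable g"
  shows "infinitely_differentiable (\<lambda>x. f x - g x)"
proof -
  obtain D where D: "D 0 = f" "\<And>k x. (D k has_real_derivative D (Suc k) x) (at x)"
    using assms unfolding infinitely_differentiable_def by blast
  obtain E where E: "E 0 = g" "\<And>k x. (E k has_real_derivative E (Suc k) x) (at x)"
    using assms unfolding infinitely_differentiable_def by blast
  show ?thesis unfolding infinitely_differentiable_def
    by (intro exI[of _ "\<lambda>k x. D k x - E k x"]) (auto simp: D(1) E(1) intro!: DERIV_diff D(2) E(2))
qed

lemma infinitely_differentiable_affine: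
  assumes "infinitely_differentiable f"
  shows "infinitely_differentiable (\<lambda>x. f (\<alpha> * x + \<beta>))"
proof -
  obtain D where D: "D 0 = f" "\<And>k x. (D k has_real_derivative D (Suc k) x) (at x)"
    using assms unfolding infinitely_differentiable_def by blast
  have "((\<lambda>x. \<alpha>^k * D k (\<alpha> * x + \<beta>)) has_real_derivative \<alpha>^(Suc k) * D (Suc k) (\<alpha> * x + \<beta>)) (at x)"
    for k x
  proof -
    have "((\<lambda>x. \<alpha> * x + \<beta>) has_real_derivative \<alpha>) (at x)"
      by (auto intro!: derivative_eq_intros)
    from DERIV_cmult[OF DERIV_chain2[OF D(2) this], of "\<alpha>^k"] show ?thesis
      by (simp add: algebra_simps)
  qed
  then show ?thesis unfolding infinitely_differentiable_def
    by (intro exI[of _ "\<lambda>k x. \<alpha>^k * D k (\<alpha> * x + \<beta>)"]) (auto simp: D(1))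
qed

lemma infinitely_differentiable_imp_isCont:
  assumes "infinitely_differentiable f"
  shows "isCont f x"
  using assms DERIV_isCont unfolding infinitely_differentiable_def by metis

lemma infinitely_differentiable_imp_continuous_on:
  "infinitely_differentiable f \<Longrightarrow> continuous_on S f"
  by (intro continuous_at_imp_continuous_on ballI infinitely_differentiable_imp_isCont)

lemma infinitely_differentiable_imp_borel_measurable:
  "infinitely_differentiable f \<Longrightarrow> f \<in> borel_measurable borel"
  by (intro borel_measurable_continuous_onI infinitely_differentiable_imp_continuous_on)

lemma has_real_derivative_interval_integral:
  fixes a x :: real
  assumes "\<And>x. isCont f x"
  shows "((\<lambda>x. LBINT t=a..x. f t) has_real_derivative f x) (at x)"
proof -
  have "((\<lambda>y. LBINT t=a..y. f t) has_vector_derivative f x) (at x within {min a x - 1..max a x + 1})"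
    by (rule interval_integral_FTC2) (auto intro!: continuous_at_imp_continuous_on assms)
  moreover have "x \<in> interior {min a x - 1..max a x + 1}" by auto
  ultimately show ?thesis
    unfolding has_real_derivative_iff_has_vector_derivative using at_within_interior by metis
qed

lemma infinitely_differentiable_interval_integral:
  fixes a :: real
  assumes "infinitely_differentiable f"
  shows "infinitely_differentiable (\<lambda>x. LBINT t=a..x. f t)"
proof -
  obtain D where D: "D 0 = f" "\<And>k x. (D k has_real_derivative D (Suc k) x) (at x)"
    using assms unfolding infinitely_differentiable_def by blast
  define E where "E k = (case k of 0 \<Rightarrow> (\<lambda>x. LBINT t=a..x. f t) | Suc j \<Rightarrow> D j)" for k
  have "(E k has_real_derivative E (Suc k) x) (at x)" for k x
    using has_real_derivative_interval_integral[OF infinitely_differentiable_imp_isCont[OF assms]] D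
    by (cases k) (simp_all add: E_def)
  then show ?thesis unfolding infinitely_differentiable_def by (intro exI[of _ E]) (simp add: E_def)
qed

section \<open>A smooth bump function\<close>

text \<open>
  On (0,1) the k-th derivative of exp(-1/z), z = x(1-x), has the form
  p_k(x) / z^(2k) * exp(-1/z): differentiating gives the numerator
  p_k' z^2 - 2k p_k z' z + p_k z' with z' = 1 - 2x.
\<close>
fun bump_poly :: "nat \<Rightarrow> real poly" where
  "bump_poly 0 = 1"
| "bump_poly (Suc k) =
     pderiv (bump_poly k) * [:0, 1, -1:]^2 - smult (2 * of_nat k) (bump_poly k * [:1, -2:] * [:0, 1, -1:])
       + bump_poly k * [:1, -2:]"

definition bump_expr :: "nat \<Rightarrow> real \<Rightarrow> real" where
  "bump_expr k x = poly (bump_poly k) x / (x * (1 - x))^(2 * k) * exp (-1 / (x * (1 - x)))"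

lemma has_real_derivative_bump_expr:
  assumes "0 < x" "x < 1"
  shows "(bump_expr k has_real_derivative bump_expr (Suc k) x) (at x)"
proof -
  have z: "x * (1 - x) \<noteq> 0" using assms by simp
  have e: "((\<lambda>y. exp (-1 / (y * (1 - y)))) has_real_derivative
      exp (-1 / (x * (1 - x))) * ((1 - 2 * x) / (x * (1 - x))^2)) (at x)"
    using z by (auto intro!: derivative_eq_intros simp: field_simps power2_eq_square)
               (metis minus_diff_eq minus_divide_left)
  have "2 * real k * ((1 - 2 * x) * (x * (1 - x)) ^ (2 * k - Suc 0))
      = 2 * real k * (x * (1 - x)) ^ (2 * k) * (1 - 2 * x) / (x * (1 - x))"
    using z by (cases k) (simp_all add: field_simps)
  then have p: "((\<lambda>y. poly (bump_poly k) y / (y * (1 - y))^(2 * k)) has_real_derivative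
      (poly (pderiv (bump_poly k)) x * (x * (1 - x))^(2 * k)
        - poly (bump_poly k) x * (of_nat (2 * k) * (x * (1 - x))^(2 * k) / (x * (1 - x)) * (1 - 2 * x)))
       / ((x * (1 - x))^(2 * k))^2) (at x)"
    using z by (auto intro!: derivative_eq_intros simp: power2_eq_square)
  have quotient: "(a * Z - p * (c * Z / z * d)) / Z^2 * E + (E * (d / z^2)) * (p / Z)
      = (a * z^2 - c * (p * d * z) + p * d) / (z^2 * Z) * E"
    if "z \<noteq> 0" "Z \<noteq> 0" for a p c d z Z E :: real
    using that by (simp add: field_simps power2_eq_square)
  have power: "(x * (1 - x))^(2 * Suc k) = (x * (1 - x))^2 * (x * (1 - x))^(2 * k)"
    by (simp add: power_add[symmetric])
  show ?thesis
    unfolding bump_expr_def[abs_def]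
    by (rule DERIV_cong[OF DERIV_mult[OF p e]], unfold power, subst quotient)
       (use z in \<open>simp_all add: algebra_simps\<close>)
qed

lemma exp_neg_inverse_le:
  assumes "z > 0" "N > 0"
  shows "exp (-1 / z) \<le> (real N * z) ^ N"
proof -
  have "((1 / z) / real N) ^ N \<le> (1 + (1 / z) / real N) ^ N"
    by (rule power_mono) (use assms in auto)
  also have "\<dots> \<le> exp (1 / z)"
    by (rule exp_ge_one_plus_x_over_n_power_n) (use assms in \<open>auto intro: order.trans[of _ 0]\<close>)
  finally have "1 / exp (1 / z) \<le> 1 / ((1 / z) / real N) ^ N"
    by (rule divide_left_mono) (use assms in auto)
  also have "1 / ((1 / z) / real N) ^ N = (real N * z) ^ N"
    using assms by (simp add: field_simps power_divide)
  finally show ?thesis by (simp add: exp_minus field_simps)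
qed

lemma bump_expr_bound: "\<exists>C\<ge>0. \<forall>x. 0 < x \<and> x < 1 \<longrightarrow> \<bar>bump_expr k x\<bar> \<le> C * (x * (1 - x))"
proof -
  have "compact (poly (bump_poly k) ` {0..1})"
    by (intro compact_continuous_image) (auto intro: continuous_intros)
  then obtain B where B: "\<And>y. y \<in> poly (bump_poly k) ` {0..1} \<Longrightarrow> norm y \<le> B"
    using compact_imp_bounded bounded_iff by metis
  define N where "N = 2 * k + 1"
  have B0: "B \<ge> 0" using B[of "poly (bump_poly k) 0"] by auto
  have "\<bar>bump_expr k x\<bar> \<le> B * real N ^ N * (x * (1 - x))" if x: "0 < x" "x < 1" for x
  proof -
    define z where "z = x * (1 - x)"
    have z: "z > 0" using x by (simp add: z_def)
    have "\<bar>bump_expr k x\<bar> = \<bar>poly (bump_poly k) x\<bar> / z^(2 * k) * exp (-1 / z)"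
      using z by (simp add: bump_expr_def z_def abs_mult)
    also have "\<dots> \<le> B / z^(2 * k) * (real N * z) ^ N"
      using B[of "poly (bump_poly k) x"] x z B0 exp_neg_inverse_le[OF z, of N]
      by (intro mult_mono divide_right_mono) (auto simp: N_def)
    also have "(real N * z) ^ N = real N ^ N * z^(2 * k) * z"
      by (simp add: N_def power_mult_distrib power_add)
    also have "B / z^(2 * k) * (real N ^ N * z^(2 * k) * z) = B * real N ^ N * z"
      using z by (simp add: field_simps)
    finally show ?thesis by (simp add: z_def)
  qed
  then show ?thesis using B0 by (intro exI[of _ "B * real N ^ N"]) auto
qed

lemma has_real_derivative_at_from_limit:
  fixes f f' :: "real \<Rightarrow> real"
  assumes cont: "isCont f c" and r: "r > 0"
    and der: "\<And>x. x \<noteq> c \<Longrightarrow> \<bar>x - c\<bar> < r \<Longrightarrow> (f has_real_derivative f' x) (at x)"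
    and lim: "(f' \<longlongrightarrow> L) (at c)"
  shows "(f has_real_derivative L) (at c)"
proof -
  have "((\<lambda>h. (f (c + h) - f c) / h) \<longlongrightarrow> L) (at 0)"
    unfolding LIM_eq
  proof (intro allI impI)
    fix e :: real assume "e > 0"
    then obtain s where s: "s > 0" "\<And>x. x \<noteq> c \<Longrightarrow> \<bar>x - c\<bar> < s \<Longrightarrow> \<bar>f' x - L\<bar> < e"
      using lim[unfolded LIM_eq] by (metis real_norm_def)
    have "\<bar>(f (c + h) - f c) / h - L\<bar> < e" if h: "h \<noteq> 0" "\<bar>h\<bar> < min s r" for h
    proof -
      define a b where "a = min c (c + h)" and "b = max c (c + h)"
      have ab: "a < b" using h by (auto simp: a_def b_def)
      have near: "\<bar>x - c\<bar> < min s r" if "a \<le> x" "x \<le> b" for x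
        using h that by (auto simp: a_def b_def)
      have "continuous_on {a..b} f"
      proof (intro continuous_at_imp_continuous_on ballI)
        fix x assume "x \<in> {a..b}"
        then show "isCont f x"
          using cont der[of x] near[of x] DERIV_isCont by (cases "x = c") auto
      qed
      moreover have "f differentiable (at x)" if "a < x" "x < b" for x
      proof -
        have "x \<noteq> c" using that by (auto simp: a_def b_def)
        then show ?thesis using der[of x] near[of x] that real_differentiable_def by auto
      qed
      ultimately obtain l z where z: "a < z" "z < b" "DERIV f z :> l" "f b - f a = (b - a) * l"
        using MVT[OF ab] by blast
      have zc: "z \<noteq> c" "\<bar>z - c\<bar> < min s r"
        using z(1,2) near[of z] by (auto simp: a_def b_def)
      have "l = f' z" using DERIV_unique[OF z(3) der[OF zc(1)]] zc by simp
      moreover have "(f (c + h) - f c) / h = l"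
        using z(4) h by (cases "h > 0") (auto simp: a_def b_def field_simps)
      ultimately show ?thesis using s(2)[OF zc(1)] zc by simp
    qed
    then show "\<exists>s>0. \<forall>h. h \<noteq> 0 \<and> norm (h - 0) < s \<longrightarrow> norm ((f (c + h) - f c) / h - L) < e"
      using s(1) r by (intro exI[of _ "min s r"]) auto
  qed
  then show ?thesis by (simp add: DERIV_def)
qed

definition bump_derivs :: "nat \<Rightarrow> real \<Rightarrow> real" where
  "bump_derivs k x = (if 0 < x \<and> x < 1 then bump_expr k x else 0)"

abbreviation bump :: "real \<Rightarrow> real" where
  "bump \<equiv> bump_derivs 0"

lemma bump_eq: "bump x = (if 0 < x \<and> x < 1 then exp (-1 / (x * (1 - x))) else 0)"
  by (simp add: bump_derivs_def bump_expr_def)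

lemma bump_derivs_tendsto_0:
  assumes "c = 0 \<or> c = 1"
  shows "(bump_derivs k \<longlongrightarrow> 0) (at c)"
proof -
  obtain C where C: "C \<ge> 0" "\<And>x. 0 < x \<and> x < 1 \<Longrightarrow> \<bar>bump_expr k x\<bar> \<le> C * (x * (1 - x))"
    using bump_expr_bound by blast
  have bound: "\<bar>bump_derivs k x\<bar> \<le> C * \<bar>x - c\<bar>" for x
  proof (cases "0 < x \<and> x < 1")
    case True
    then have "x * (1 - x) \<le> x" "x * (1 - x) \<le> 1 - x"
      by (simp_all add: mult_le_cancel_left1 mult_le_cancel_right1)
    moreover have "\<bar>x - c\<bar> = x \<or> \<bar>x - c\<bar> = 1 - x"
      using assms True by auto
    ultimately have "x * (1 - x) \<le> \<bar>x - c\<bar>"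
      by linarith
    then have "C * (x * (1 - x)) \<le> C * \<bar>x - c\<bar>" using C(1) by (rule mult_left_mono)
    then show ?thesis using C(2)[OF True] True by (simp add: bump_derivs_def)
  qed (use C in \<open>auto simp: bump_derivs_def\<close>)
  have "((\<lambda>x. C * \<bar>x - c\<bar>) \<longlongrightarrow> C * \<bar>c - c\<bar>) (at c)"
    by (intro tendsto_intros)
  then have "((\<lambda>x. C * \<bar>x - c\<bar>) \<longlongrightarrow> 0) (at c)"
    by simp
  moreover have "\<forall>\<^sub>F x in at c. norm (bump_derivs k x) \<le> C * \<bar>x - c\<bar>"
    using bound by (intro always_eventually) simp
  ultimately show ?thesis
    by (rule Lim_null_comparison[rotated])
qed

lemma has_real_derivative_bump_derivs: "(bump_derivs k has_real_derivative bump_derivs (Suc k) x) (at x)"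
proof -
  have off_boundary: "(bump_derivs k has_real_derivative bump_derivs (Suc k) x) (at x)"
    if "x \<noteq> 0" "x \<noteq> 1" for k x
  proof (cases "0 < x \<and> x < 1")
    case True
    have "(bump_derivs k has_real_derivative bump_expr (Suc k) x) (at x)"
      by (rule has_field_derivative_transform_within_open[OF has_real_derivative_bump_expr, where S="{0<..<1}"])
         (use True in \<open>auto simp: bump_derivs_def\<close>)
    then show ?thesis using True by (simp add: bump_derivs_def)
  next
    case False
    then have "x \<in> {..<0} \<union> {1<..}" using that by auto
    then have "(bump_derivs k has_real_derivative 0) (at x)"
      by (intro has_field_derivative_transform_within_open[OF DERIV_const, where S="{..<0} \<union> {1<..}"])
         (auto simp: bump_derivs_def)
    moreover have "bump_derivs (Suc k) x = 0" using False by (auto simp: bump_derivs_def)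
    ultimately show ?thesis by simp
  qed
  show ?thesis
  proof (cases "x = 0 \<or> x = 1")
    case True
    have "(bump_derivs k has_real_derivative 0) (at x)"
    proof (rule has_real_derivative_at_from_limit[where r="1/2"])
      show "isCont (bump_derivs k) x"
        using bump_derivs_tendsto_0[OF True] True by (auto simp: isCont_def bump_derivs_def)
      show "(bump_derivs (Suc k) \<longlongrightarrow> 0) (at x)" using True by (rule bump_derivs_tendsto_0)
      show "(bump_derivs k has_real_derivative bump_derivs (Suc k) y) (at y)"
        if "y \<noteq> x" "\<bar>y - x\<bar> < 1/2" for y
        using that True by (intro off_boundary) auto
    qed simp
    then show ?thesis using True by (auto simp: bump_derivs_def)
  qed (auto intro: off_boundary)
qed

lemma infinitely_differentiable_bump: "infinitely_differentiable bump"
  unfolding infinitely_differentiable_def using has_real_derivative_bump_derivs by blast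

lemma bump_nonneg: "bump x \<ge> 0"
  by (simp add: bump_eq)

lemma bump_pos: "0 < x \<Longrightarrow> x < 1 \<Longrightarrow> bump x > 0"
  by (simp add: bump_eq)

lemma bump_eq_0: "x \<le> 0 \<or> x \<ge> 1 \<Longrightarrow> bump x = 0"
  by (auto simp: bump_eq)

lemma interval_integral_eq_0:
  fixes a b :: real
  assumes "\<And>x. min a b < x \<Longrightarrow> x < max a b \<Longrightarrow> f x = 0"
  shows "(LBINT t=a..b. f t) = 0"
proof -
  have "(LBINT t=a..b. f t) = (LBINT t=a..b. 0)"
    by (rule interval_integral_cong) (use assms in \<open>auto simp: einterval_iff min_def max_def split: if_splits\<close>)
  then show ?thesis by simp
qed

lemma interval_integral_sum_isCont:
  fixes a b c :: real
  assumes "\<And>x. isCont f x"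
  shows "(LBINT t=a..b. f t) + (LBINT t=b..c. f t) = (LBINT t=a..c. f t)"
proof (rule interval_integral_sum)
  have "interval_lebesgue_integrable lborel (min a (min b c)) (max a (max b c)) f"
    by (intro interval_integrable_isCont assms)
  moreover have "ereal (min a (min b c)) = min (ereal a) (min (ereal b) (ereal c))"
     "ereal (max a (max b c)) = max (ereal a) (max (ereal b) (ereal c))"
    by (auto simp: min_def max_def)
  ultimately show "interval_lebesgue_integrable lborel (min (ereal a) (min (ereal b) (ereal c)))
      (max (ereal a) (max (ereal b) (ereal c))) f"
    by simp
qed

definition bump_integral :: "real \<Rightarrow> real" where
  "bump_integral x = (LBINT t=(0::real)..x. bump t)"

definition bump_mass :: real where
  "bump_mass = bump_integral 1"

definition smooth_step :: "real \<Rightarrow> real" where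
  "smooth_step x = bump_integral x / bump_mass"

lemma has_real_derivative_bump_integral: "(bump_integral has_real_derivative bump x) (at x)"
  unfolding bump_integral_def[abs_def]
  by (rule has_real_derivative_interval_integral[OF infinitely_differentiable_imp_isCont[OF infinitely_differentiable_bump]])

lemma bump_integral_nonpos: "x \<le> 0 \<Longrightarrow> bump_integral x = 0"
  unfolding bump_integral_def by (rule interval_integral_eq_0) (auto intro: bump_eq_0)

lemma bump_integral_ge_1:
  assumes "x \<ge> 1"
  shows "bump_integral x = bump_mass"
proof -
  have "bump_integral x = bump_integral 1 + (LBINT t=(1::real)..x. bump t)"
    unfolding bump_integral_def
    by (rule interval_integral_sum_isCont[symmetric])
       (rule infinitely_differentiable_imp_isCont[OF infinitely_differentiable_bump])
  also have "(LBINT t=(1::real)..x. bump t) = 0"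
    by (rule interval_integral_eq_0) (use assms in \<open>auto intro: bump_eq_0\<close>)
  finally show ?thesis by (simp add: bump_mass_def)
qed

lemma bump_integral_mono: "x \<le> y \<Longrightarrow> bump_integral x \<le> bump_integral y"
  by (rule DERIV_nonneg_imp_nondecreasing[of x y bump_integral])
     (use has_real_derivative_bump_integral bump_nonneg in blast)+

lemma bump_mass_pos: "bump_mass > 0"
proof -
  obtain l z where z: "0 < z" "z < 1" "(bump_integral has_real_derivative l) (at z)"
    "bump_integral 1 - bump_integral 0 = (1 - 0) * l"
    using MVT[of 0 1 bump_integral] has_real_derivative_bump_integral DERIV_isCont real_differentiable_def
    by (metis continuous_at_imp_continuous_on zero_less_one)
  have "l = bump z" using DERIV_unique[OF z(3) has_real_derivative_bump_integral] .
  then show ?thesis using z bump_pos[of z] bump_integral_nonpos[of 0] by (simp add: bump_mass_def)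
qed

lemma infinitely_differentiable_smooth_step: "infinitely_differentiable smooth_step"
proof -
  have "infinitely_differentiable (\<lambda>x. (1 / bump_mass) * bump_integral x)"
    unfolding bump_integral_def
    by (intro infinitely_differentiable_cmult infinitely_differentiable_interval_integral infinitely_differentiable_bump)
  then show ?thesis unfolding smooth_step_def[abs_def] by simp
qed

lemma smooth_step_nonpos: "x \<le> 0 \<Longrightarrow> smooth_step x = 0"
  by (simp add: smooth_step_def bump_integral_nonpos)

lemma smooth_step_ge_1: "x \<ge> 1 \<Longrightarrow> smooth_step x = 1"
  using bump_mass_pos by (simp add: smooth_step_def bump_integral_ge_1)

lemma smooth_step_bounds: "0 \<le> smooth_step x" "smooth_step x \<le> 1"
proof -
  have "0 \<le> bump_integral x" "bump_integral x \<le> bump_mass"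
    using bump_integral_mono[of "min x 0" x] bump_integral_mono[of x "max x 1"]
    by (simp_all add: bump_integral_nonpos bump_integral_ge_1)
  then show "0 \<le> smooth_step x" "smooth_step x \<le> 1"
    using bump_mass_pos by (simp_all add: smooth_step_def)
qed

lemma has_real_derivative_smooth_step: "(smooth_step has_real_derivative bump x / bump_mass) (at x)"
  unfolding smooth_step_def[abs_def] using DERIV_cdivide[OF has_real_derivative_bump_integral] by simp

text \<open>A smooth approximation of the indicator of (a,1) as e tends to 0.\<close>
definition plateau :: "real \<Rightarrow> real \<Rightarrow> real \<Rightarrow> real" where
  "plateau a e x = smooth_step ((x - (a + e)) / e) - smooth_step ((x - (1 - 2 * e)) / e)"

lemma infinitely_differentiable_plateau: "infinitely_differentiable (plateau a e)"
proof -
  have "plateau a e = (\<lambda>x. smooth_step ((1 / e) * x + (- (a + e) / e)) - smooth_step ((1 / e) * x + (- (1 - 2 * e) / e)))"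
    by (rule ext, cases "e = 0") (simp_all add: plateau_def field_simps)
  then show ?thesis
    by (simp only:) (intro infinitely_differentiable_diff infinitely_differentiable_affine
        infinitely_differentiable_smooth_step)
qed

lemma plateau_abs_le_1: "\<bar>plateau a e x\<bar> \<le> 1"
  using smooth_step_bounds[of "(x - (a + e)) / e"] smooth_step_bounds[of "(x - (1 - 2 * e)) / e"]
  by (simp add: plateau_def abs_le_iff)

lemma plateau_eq_0:
  assumes e: "e > 0" and ae: "a + 3 * e \<le> 1" and x: "x \<le> a + e \<or> x \<ge> 1 - e"
  shows "plateau a e x = 0"
proof (cases "x \<le> a + e")
  case True
  then have "(x - (a + e)) / e \<le> 0" "(x - (1 - 2 * e)) / e \<le> 0"
    using e ae by (auto simp: divide_le_0_iff)
  then show ?thesis by (simp add: plateau_def smooth_step_nonpos)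
next
  case False
  then have "(x - (a + e)) / e \<ge> 1" "(x - (1 - 2 * e)) / e \<ge> 1"
    using e ae x by (auto simp: field_simps)
  then show ?thesis by (simp add: plateau_def smooth_step_ge_1)
qed

lemma plateau_eq_1:
  assumes e: "e > 0" and x: "a + 2 * e \<le> x" "x \<le> 1 - 2 * e"
  shows "plateau a e x = 1"
proof -
  have "(x - (a + e)) / e \<ge> 1" "(x - (1 - 2 * e)) / e \<le> 0"
    using e x by (auto simp: field_simps divide_le_0_iff)
  then show ?thesis by (simp add: plateau_def smooth_step_nonpos smooth_step_ge_1)
qed

definition centered_bump :: "real \<Rightarrow> real" where
  "centered_bump x = 3 / bump_mass * bump (3 * x - 1)"

lemma infinitely_differentiable_centered_bump: "infinitely_differentiable centered_bump"
  using infinitely_differentiable_cmult[OF infinitely_differentiable_affine[OF infinitely_differentiable_bump],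
      of "3 / bump_mass" 3 "-1"]
  unfolding centered_bump_def[abs_def] by simp

lemma centered_bump_eq_0: "x \<le> 1/3 \<or> x \<ge> 2/3 \<Longrightarrow> centered_bump x = 0"
  unfolding centered_bump_def by (subst bump_eq_0) auto

lemma centered_bump_integral: "(LBINT x=(0::real)..(1::real). centered_bump x) = 1"
proof -
  have "((\<lambda>x. smooth_step (3 * x - 1)) has_real_derivative centered_bump x) (at x)" for x
  proof -
    have "((\<lambda>x. 3 * x - 1) has_real_derivative 3) (at x)"
      using DERIV_diff[OF DERIV_cmult[OF DERIV_ident, of 3] DERIV_const[of 1]] by simp
    from DERIV_chain2[OF has_real_derivative_smooth_step this] show ?thesis
      by (simp add: centered_bump_def mult.commute)
  qed
  then have "(LBINT x=(0::real)..(1::real). centered_bump x) = smooth_step (3 * 1 - 1) - smooth_step (3 * 0 - 1)"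
    by (intro interval_integral_FTC_finite infinitely_differentiable_imp_continuous_on
        infinitely_differentiable_centered_bump)
       (simp add: has_real_derivative_iff_has_vector_derivative has_vector_derivative_at_within)
  then show ?thesis by (simp add: smooth_step_nonpos smooth_step_ge_1)
qed

section \<open>The du Bois-Reymond lemma\<close>

definition zero_mean_test :: "(real \<Rightarrow> real) \<Rightarrow> bool" where
  "zero_mean_test \<tau> \<longleftrightarrow> infinitely_differentiable \<tau>
     \<and> (\<exists>lo hi. 0 < lo \<and> hi < 1 \<and> (\<forall>x. x \<notin> {lo..hi} \<longrightarrow> \<tau> x = 0))
     \<and> (LBINT x=(0::real)..(1::real). \<tau> x) = 0"

lemma zero_mean_test_antiderivative:
  assumes "zero_mean_test \<tau>"
  defines "\<phi> \<equiv> (\<lambda>x::real. LBINT t=(0::real)..x. \<tau> t)"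
  shows "test_fun01 \<phi>" "\<And>x. (\<phi> has_real_derivative \<tau> x) (at x)" "\<phi> 1 = 0"
proof -
  obtain lo hi where lo: "0 < lo" and hi: "hi < 1" and supp: "\<And>x. x \<notin> {lo..hi} \<Longrightarrow> \<tau> x = 0"
    and sm: "infinitely_differentiable \<tau>" and int0: "(LBINT x=(0::real)..(1::real). \<tau> x) = 0"
    using assms(1) unfolding zero_mean_test_def by blast
  have cont: "\<And>x. isCont \<tau> x" using infinitely_differentiable_imp_isCont[OF sm] .
  show "\<And>x. (\<phi> has_real_derivative \<tau> x) (at x)"
    unfolding \<phi>_def by (rule has_real_derivative_interval_integral[OF cont])
  show "\<phi> 1 = 0" using int0 by (simp add: \<phi>_def)
  have vanish: "\<phi> x = 0" if "x \<notin> {lo..hi}" for x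
  proof (cases "x < lo")
    case True
    then show ?thesis unfolding \<phi>_def by (intro interval_integral_eq_0 supp) (use lo in auto)
  next
    case False
    then have x: "x > hi" using that by auto
    have "\<phi> x + (LBINT t=x..(1::real). \<tau> t) = (LBINT t=(0::real)..(1::real). \<tau> t)"
      unfolding \<phi>_def by (rule interval_integral_sum_isCont[OF cont])
    moreover have "(LBINT t=x..(1::real). \<tau> t) = 0"
      by (intro interval_integral_eq_0 supp) (use x hi in auto)
    ultimately show ?thesis using int0 by simp
  qed
  have "smooth_fun \<phi>"
    unfolding \<phi>_def
    by (intro infinitely_differentiable_imp_smooth_fun infinitely_differentiable_interval_integral sm)
  then show "test_fun01 \<phi>" unfolding test_fun01_def
    using vanish lo hi by blast
qed

lemma zero_mean_test_plateau:
  assumes "0 \<le> a" "0 < e" "a + 3 * e \<le> 1"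
  shows "zero_mean_test (\<lambda>x. plateau a e x - (LBINT t=(0::real)..(1::real). plateau a e t) * centered_bump x)"
    (is "zero_mean_test ?\<tau>")
proof -
  define c where "c = (LBINT t=(0::real)..(1::real). plateau a e t)"
  have "?\<tau> x = 0" if "x \<notin> {min (a + e) (1/3)..max (1 - e) (2/3)}" for x
  proof -
    have "plateau a e x = 0" using that assms by (intro plateau_eq_0) auto
    moreover have "centered_bump x = 0" using that by (intro centered_bump_eq_0) auto
    ultimately show ?thesis by simp
  qed
  moreover have "(LBINT x=(0::real)..(1::real). ?\<tau> x) = 0"
  proof -
    have "interval_lebesgue_integrable lborel (ereal 0) (ereal 1) (plateau a e)"
      "interval_lebesgue_integrable lborel (ereal 0) (ereal 1) (\<lambda>x. c * centered_bump x)"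
      by (intro interval_integrable_isCont infinitely_differentiable_imp_isCont
          infinitely_differentiable_cmult infinitely_differentiable_plateau
          infinitely_differentiable_centered_bump)+
    then show ?thesis
      using centered_bump_integral by (simp add: interval_lebesgue_integral_diff c_def)
  qed
  moreover have "infinitely_differentiable ?\<tau>"
    by (intro infinitely_differentiable_diff infinitely_differentiable_cmult
        infinitely_differentiable_plateau infinitely_differentiable_centered_bump)
  moreover have "0 < min (a + e) (1/3)" "max (1 - e) (2/3) < 1" using assms by auto
  ultimately show ?thesis unfolding zero_mean_test_def by blast
qed

definition plateau_width :: "real \<Rightarrow> nat \<Rightarrow> real" where
  "plateau_width a n = (1 - a) / 8 * inverse (real (Suc n))"

lemma plateau_width:
  assumes "0 \<le> a" "a < 1"
  shows "plateau_width a n > 0" "a + 3 * plateau_width a n \<le> 1" "plateau_width a \<longlonglongrightarrow> 0"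
proof -
  show "plateau_width a n > 0" using assms by (simp add: plateau_width_def)
  have "inverse (real (Suc n)) \<le> 1" by (simp add: inverse_le_1_iff)
  then have "plateau_width a n \<le> (1 - a) / 8"
    using assms unfolding plateau_width_def by (intro mult_left_le) auto
  moreover have "3 * ((1 - a) / 8) \<le> 1 - a" using assms by (simp add: field_simps)
  ultimately show "a + 3 * plateau_width a n \<le> 1" by linarith
  show "plateau_width a \<longlonglongrightarrow> 0"
    unfolding plateau_width_def[abs_def] using tendsto_mult_right_zero[OF LIMSEQ_inverse_real_of_nat] by simp
qed

lemma plateau_tendsto_indicator:
  assumes a: "0 \<le> a" "a < 1"
  shows "(\<lambda>n. plateau a (plateau_width a n) x) \<longlonglongrightarrow> indicator {a<..<1} x"
proof (cases "a < x \<and> x < 1")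
  case True
  have "\<forall>\<^sub>F n in sequentially. plateau_width a n < min (x - a) (1 - x) / 2"
    using True by (intro order_tendstoD(2)[OF plateau_width(3)[OF a]]) auto
  then have "\<forall>\<^sub>F n in sequentially. plateau a (plateau_width a n) x = 1"
    by eventually_elim (intro plateau_eq_1 plateau_width(1)[OF a]; auto)
  then show ?thesis using True by (simp add: tendsto_eventually)
next
  case False
  then have "plateau a (plateau_width a n) x = 0" for n
    using plateau_width(1,2)[OF a, of n] by (intro plateau_eq_0) auto
  then show ?thesis using False by simp
qed

lemma integral_mult_plateau_tendsto:
  assumes a: "0 \<le> a" "a < 1" and w: "integrable lborel w"
  shows "(\<lambda>n. \<integral>x. w x * plateau a (plateau_width a n) x \<partial>lborel) \<longlonglongrightarrow> (\<integral>x. w x * indicator {a<..<1} x \<partial>lborel)"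
proof (rule integral_dominated_convergence[where w="\<lambda>x. \<bar>w x\<bar>"])
  have [measurable]: "w \<in> borel_measurable borel" "plateau a e \<in> borel_measurable borel" for e
    using w infinitely_differentiable_imp_borel_measurable[OF infinitely_differentiable_plateau] by auto
  show "(\<lambda>x. w x * indicator {a<..<1} x) \<in> borel_measurable lborel" by measurable
  show "(\<lambda>x. w x * plateau a (plateau_width a n) x) \<in> borel_measurable lborel" for n by measurable
  show "integrable lborel (\<lambda>x. \<bar>w x\<bar>)" using w by simp
  show "AE x in lborel. (\<lambda>n. w x * plateau a (plateau_width a n) x) \<longlonglongrightarrow> w x * indicator {a<..<1} x"
    using plateau_tendsto_indicator[OF a] by (intro AE_I2 tendsto_mult_left)
  show "AE x in lborel. norm (w x * plateau a (plateau_width a n) x) \<le> \<bar>w x\<bar>" for n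
    using plateau_abs_le_1 by (intro AE_I2) (simp add: abs_mult mult_left_le)
qed

lemma emeasure_density_max_0_greaterThan:
  fixes v :: "real \<Rightarrow> real"
  assumes "integrable lborel v"
  shows "integrable lborel (\<lambda>x. indicator {a<..} x * max 0 (v x))"
    and "emeasure (density lborel (\<lambda>x. ennreal (max 0 (v x)))) {a<..}
      = ennreal (\<integral>x. indicator {a<..} x * max 0 (v x) \<partial>lborel)"
proof -
  have [measurable]: "v \<in> borel_measurable lborel" using assms by auto
  show int: "integrable lborel (\<lambda>x. indicator {a<..} x * max 0 (v x))"
    by (rule Bochner_Integration.integrable_bound[OF integrable_abs[OF assms]]) (auto split: split_indicator)
  have "emeasure (density lborel (\<lambda>x. ennreal (max 0 (v x)))) {a<..}
      = (\<integral>\<^sup>+ x. ennreal (max 0 (v x)) * indicator {a<..} x \<partial>lborel)"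
    by (rule emeasure_density) auto
  also have "\<dots> = (\<integral>\<^sup>+ x. ennreal (indicator {a<..} x * max 0 (v x)) \<partial>lborel)"
    by (intro nn_integral_cong) (auto split: split_indicator)
  also have "\<dots> = ennreal (\<integral>x. indicator {a<..} x * max 0 (v x) \<partial>lborel)"
    by (rule nn_integral_eq_integral[OF int]) auto
  finally show "emeasure (density lborel (\<lambda>x. ennreal (max 0 (v x)))) {a<..}
      = ennreal (\<integral>x. indicator {a<..} x * max 0 (v x) \<partial>lborel)" .
qed

text \<open>The positive and negative parts of v are densities of measures that agree on all rays.\<close>
lemma AE_eq_0_if_ray_integrals_eq_0:
  fixes v :: "real \<Rightarrow> real"
  assumes v: "integrable lborel v"
    and rays: "\<And>a. (\<integral>x. indicator {a<..} x * v x \<partial>lborel) = 0"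
  shows "AE x in lborel. v x = 0"
proof -
  have [measurable]: "v \<in> borel_measurable lborel" using v by auto
  note pos = emeasure_density_max_0_greaterThan[OF v]
  note neg = emeasure_density_max_0_greaterThan[OF integrable_minus[OF v]]
  have eq: "(\<integral>x. indicator {a<..} x * max 0 (v x) \<partial>lborel) = (\<integral>x. indicator {a<..} x * max 0 (- v x) \<partial>lborel)"
    for a
  proof -
    have "(\<integral>x. indicator {a<..} x * max 0 (v x) \<partial>lborel) - (\<integral>x. indicator {a<..} x * max 0 (- v x) \<partial>lborel)
       = (\<integral>x. indicator {a<..} x * max 0 (v x) - indicator {a<..} x * max 0 (- v x) \<partial>lborel)"
      by (rule Bochner_Integration.integral_diff[OF pos(1) neg(1), symmetric])
    also have "\<dots> = (\<integral>x. indicator {a<..} x * v x \<partial>lborel)"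
      by (intro Bochner_Integration.integral_cong) (auto simp: max_def)
    finally show ?thesis using rays[of a] by simp
  qed
  have "density lborel (\<lambda>x. ennreal (max 0 (v x))) = density lborel (\<lambda>x. ennreal (max 0 (- v x)))"
    by (rule measure_eqI_lessThan) (auto simp: pos(2) neg(2) eq)
  then have "AE x in lborel. ennreal (max 0 (v x)) = ennreal (max 0 (- v x))"
    by (intro sigma_finite_measure.density_unique[OF sigma_finite_lborel]) auto
  then show ?thesis
    by eventually_elim (auto simp: max_def split: if_splits)
qed

lemma integrable_mult_bounded:
  fixes w f :: "real \<Rightarrow> real"
  assumes "integrable lborel w" "f \<in> borel_measurable borel" "\<And>x. \<bar>f x\<bar> \<le> B"
  shows "integrable lborel (\<lambda>x. w x * f x)"
proof (rule Bochner_Integration.integrable_bound[OF integrable_mult_right[OF integrable_abs[OF assms(1)], of B]])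
  show "(\<lambda>x. w x * f x) \<in> borel_measurable lborel" using assms by measurable
  show "AE x in lborel. norm (w x * f x) \<le> norm (B * \<bar>w x\<bar>)"
  proof (intro AE_I2)
    fix x
    have "\<bar>w x\<bar> * \<bar>f x\<bar> \<le> \<bar>w x\<bar> * B" by (intro mult_left_mono assms(3)) auto
    moreover have "B \<ge> 0" using assms(3)[of x] by linarith
    ultimately show "norm (w x * f x) \<le> norm (B * \<bar>w x\<bar>)" by (simp add: abs_mult mult.commute)
  qed
qed

lemma isCont_bounded_on_01:
  assumes "\<And>x. isCont (f::real\<Rightarrow>real) x"
  obtains K where "K \<ge> 0" "\<And>x. x \<in> {0..1} \<Longrightarrow> \<bar>f x\<bar> \<le> K"
proof -
  have "compact (f ` {0..1})"
    by (intro compact_continuous_image continuous_at_imp_continuous_on ballI assms) auto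
  then obtain K where K: "\<And>y. y \<in> f ` {0..1} \<Longrightarrow> norm y \<le> K"
    using compact_imp_bounded bounded_iff by metis
  have "\<bar>f x\<bar> \<le> K" if "x \<in> {0..1}" for x using K that by auto
  moreover have "K \<ge> 0" using K[of "f 0"] by auto
  ultimately show ?thesis using that by blast
qed

lemma centered_bump_bounded: obtains B where "\<And>x. \<bar>centered_bump x\<bar> \<le> B"
proof -
  obtain K where K: "K \<ge> 0" "\<And>x. x \<in> {0..1} \<Longrightarrow> \<bar>centered_bump x\<bar> \<le> K"
    using isCont_bounded_on_01 infinitely_differentiable_imp_isCont[OF infinitely_differentiable_centered_bump]
    by blast
  have "\<bar>centered_bump x\<bar> \<le> K" for x
    using K centered_bump_eq_0[of x] by (cases "x \<in> {0..1}") auto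
  then show ?thesis using that by blast
qed

text \<open>Test w against plateau - c * centered_bump and let the plateau approach the indicator of (a,1).\<close>
lemma ray_integral_if_orthogonal_zero_mean:
  assumes w: "integrable lborel w" and w0: "\<And>x. x \<notin> {0<..<1} \<Longrightarrow> w x = 0"
    and orth: "\<And>\<tau>. zero_mean_test \<tau> \<Longrightarrow> (\<integral>x. w x * \<tau> x \<partial>lborel) = 0"
    and a: "0 \<le> a" "a < 1"
  shows "(\<integral>x. indicator {a<..} x * w x \<partial>lborel) = (1 - a) * (\<integral>x. w x * centered_bump x \<partial>lborel)"
proof -
  define e where "e = plateau_width a"
  define c where "c n = (LBINT x=(0::real)..(1::real). plateau a (e n) x)" for n
  define C where "C = (\<integral>x. w x * centered_bump x \<partial>lborel)"
  have [measurable]: "w \<in> borel_measurable borel" using w by auto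
  obtain B where B: "\<And>x. \<bar>centered_bump x\<bar> \<le> B"
    using centered_bump_bounded by blast
  have wp: "integrable lborel (\<lambda>x. w x * plateau a (e n) x)" for n
    by (rule integrable_mult_bounded[OF w infinitely_differentiable_imp_borel_measurable plateau_abs_le_1])
       (rule infinitely_differentiable_plateau)
  have wc: "integrable lborel (\<lambda>x. w x * centered_bump x)"
    by (rule integrable_mult_bounded[OF w infinitely_differentiable_imp_borel_measurable B])
       (rule infinitely_differentiable_centered_bump)
  have eq: "(\<integral>x. w x * plateau a (e n) x \<partial>lborel) = c n * C" for n
  proof -
    have "0 = (\<integral>x. w x * (plateau a (e n) x - c n * centered_bump x) \<partial>lborel)"
      using orth[OF zero_mean_test_plateau[OF a(1) plateau_width(1,2)[OF a]]] by (simp add: e_def c_def)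
    also have "\<dots> = (\<integral>x. w x * plateau a (e n) x - c n * (w x * centered_bump x) \<partial>lborel)"
      by (simp add: algebra_simps)
    also have "\<dots> = (\<integral>x. w x * plateau a (e n) x \<partial>lborel) - c n * C"
      using wp wc by (simp add: C_def)
    finally show ?thesis by simp
  qed
  have "(\<lambda>n. \<integral>x. indicator {0<..<1::real} x * plateau a (e n) x \<partial>lborel)
      \<longlonglongrightarrow> (\<integral>x. (indicator {0<..<1::real} x * indicator {a<..<1} x :: real) \<partial>lborel)"
    unfolding e_def by (rule integral_mult_plateau_tendsto[OF a]) auto
  moreover have "(\<integral>x. (indicator {0<..<1::real} x * indicator {a<..<1} x :: real) \<partial>lborel) = 1 - a"
  proof -
    have "(\<integral>x. (indicator {0<..<1::real} x * indicator {a<..<1} x :: real) \<partial>lborel) = (\<integral>x. (indicator {a<..<1::real} x :: real) \<partial>lborel)"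
      using a by (intro Bochner_Integration.integral_cong) (auto split: split_indicator)
    then show ?thesis using a by simp
  qed
  moreover have "c = (\<lambda>n. \<integral>x. indicator {0<..<1::real} x * plateau a (e n) x \<partial>lborel)"
    by (rule ext) (simp add: c_def interval_lebesgue_integral_def set_lebesgue_integral_def)
  ultimately have "c \<longlonglongrightarrow> 1 - a"
    by simp
  then have "(\<lambda>n. \<integral>x. w x * plateau a (e n) x \<partial>lborel) \<longlonglongrightarrow> (1 - a) * C"
    unfolding eq by (intro tendsto_mult_right)
  moreover have "(\<lambda>n. \<integral>x. w x * plateau a (e n) x \<partial>lborel) \<longlonglongrightarrow> (\<integral>x. w x * indicator {a<..<1} x \<partial>lborel)"
    unfolding e_def by (rule integral_mult_plateau_tendsto[OF a w])
  ultimately have "(\<integral>x. w x * indicator {a<..<1} x \<partial>lborel) = (1 - a) * C"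
    using LIMSEQ_unique by blast
  moreover have "(\<integral>x. w x * indicator {a<..<1} x \<partial>lborel) = (\<integral>x. indicator {a<..} x * w x \<partial>lborel)"
    using a w0 by (intro Bochner_Integration.integral_cong) (auto split: split_indicator)
  ultimately show ?thesis by (simp add: C_def)
qed

lemma du_Bois_Reymond:
  assumes w: "integrable lborel w" and w0: "\<And>x. x \<notin> {0<..<1} \<Longrightarrow> w x = 0"
    and orth: "\<And>\<tau>. zero_mean_test \<tau> \<Longrightarrow> (\<integral>x. w x * \<tau> x \<partial>lborel) = 0"
  shows "\<exists>C. AE x in lborel. x \<in> {0<..<1} \<longrightarrow> w x = C"
proof -
  define C where "C = (\<integral>x. w x * centered_bump x \<partial>lborel)"
  define v where "v x = w x - indicator {0<..<1::real} x * C" for x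
  have [measurable]: "w \<in> borel_measurable borel" using w by auto
  have "integrable lborel v"
    unfolding v_def by (intro Bochner_Integration.integrable_diff w integrable_mult_left integrable_real_indicator) auto
  moreover have "(\<integral>x. indicator {a<..} x * v x \<partial>lborel) = 0" for a
  proof (cases "a < 1")
    case False
    then have "(\<lambda>x. indicator {a<..} x * v x) = (\<lambda>x. 0)" by (auto simp: v_def w0 split: split_indicator)
    then show ?thesis by (simp del: mult_eq_0_iff)
  next
    case True
    define a' where "a' = max 0 a"
    have a': "0 \<le> a'" "a' < 1" using True by (auto simp: a'_def)
    have "(\<integral>x. indicator {a<..} x * v x \<partial>lborel)
        = (\<integral>x. indicator {a'<..} x * w x - C * indicator {a'<..<1} x \<partial>lborel)"
      by (intro Bochner_Integration.integral_cong) (auto simp: v_def a'_def w0 split: split_indicator)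
    also have "\<dots> = (\<integral>x. indicator {a'<..} x * w x \<partial>lborel) - C * (1 - a')"
      using a' integrable_mult_indicator[OF _ w, of "{a'<..}"] by simp
    also have "\<dots> = 0"
      using ray_integral_if_orthogonal_zero_mean[OF w w0 orth a'] by (simp add: C_def)
    finally show ?thesis .
  qed
  ultimately have "AE x in lborel. v x = 0" by (rule AE_eq_0_if_ray_integrals_eq_0)
  then have "AE x in lborel. x \<in> {0<..<1} \<longrightarrow> w x = C"
    by eventually_elim (auto simp: v_def)
  then show ?thesis by blast
qed

section \<open>Weak derivatives on (0,1)\<close>

lemma interval_integral_0_eq_integral:
  fixes h :: "real \<Rightarrow> real" and x :: real
  assumes hz: "\<And>t. t \<le> 0 \<Longrightarrow> h t = 0" and x: "0 \<le> x"
  shows "(LBINT t=(0::real)..x. h t) = (\<integral>t. (if t < x then 1 else 0) * h t \<partial>lborel)"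
proof -
  have "(LBINT t=(0::real)..x. h t) = (\<integral>t. indicator {0<..<x} t * h t \<partial>lborel)"
    using x by (simp add: interval_lebesgue_integral_def set_lebesgue_integral_def)
  also have "\<dots> = (\<integral>t. (if t < x then 1 else 0) * h t \<partial>lborel)"
    by (intro Bochner_Integration.integral_cong) (auto simp: hz split: split_indicator)
  finally show ?thesis .
qed

lemma integrable_lower_triangle_kernel:
  fixes h \<psi> :: "real \<Rightarrow> real"
  assumes h: "integrable lborel h" and \<psi>: "\<And>x. isCont \<psi> x"
  shows "integrable (lborel \<Otimes>\<^sub>M lborel)
    (\<lambda>(t, x). h t * (indicator {0<..<1} x * (if t < x then 1 else 0) * \<psi> x))"
proof -
  have [measurable]: "h \<in> borel_measurable lborel" "\<psi> \<in> borel_measurable borel"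
    using h by (auto intro!: borel_measurable_continuous_onI continuous_at_imp_continuous_on \<psi>)
  obtain K where K: "K \<ge> 0" "\<And>x. x \<in> {0..1} \<Longrightarrow> \<bar>\<psi> x\<bar> \<le> K"
    using isCont_bounded_on_01[OF \<psi>] by blast
  have B: "integrable (lborel \<Otimes>\<^sub>M lborel) (\<lambda>(t, x). \<bar>h t\<bar> * (K * indicator {0<..<1::real} x))"
  proof (rule lborel_pair.Fubini_integrable)
    have "(\<integral>x. norm (\<bar>h t\<bar> * (K * indicator {0<..<1::real} x)) \<partial>lborel) = \<bar>h t\<bar> * K" for t
      using K(1) by (simp add: abs_mult)
    then show "integrable lborel (\<lambda>t. \<integral>x. norm (case_prod (\<lambda>t x. \<bar>h t\<bar> * (K * indicator {0<..<1::real} x)) (t, x)) \<partial>lborel)"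
      using h by simp
  qed simp_all
  show ?thesis
  proof (rule Bochner_Integration.integrable_bound[OF B])
    show "AE p in lborel \<Otimes>\<^sub>M lborel.
        norm ((\<lambda>(t, x). h t * (indicator {0<..<1} x * (if t < x then 1 else 0) * \<psi> x)) p)
        \<le> norm ((\<lambda>(t, x). \<bar>h t\<bar> * (K * indicator {0<..<1::real} x)) p)"
      using K by (intro AE_I2) (auto simp: abs_mult split: split_indicator intro!: mult_left_mono)
  qed measurable
qed

lemma integral_primitive_mult_deriv:
  fixes h \<phi> \<phi>' :: "real \<Rightarrow> real"
  assumes hint: "integrable lborel h"
    and hz: "\<And>t. t \<notin> {0<..<1} \<Longrightarrow> h t = 0"
    and dphi: "\<And>x. (\<phi> has_real_derivative \<phi>' x) (at x)"
    and cphi': "\<And>x. isCont \<phi>' x"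
    and phi1: "\<phi> 1 = 0"
  shows "(\<integral>x. indicator {0<..<1} x * (LBINT t=(0::real)..x. h t) * \<phi>' x \<partial>lborel) = - (\<integral>t. h t * \<phi> t \<partial>lborel)"
proof -
  define F where "F t x = h t * (indicator {0<..<1} x * (if t < x then 1 else 0) * \<phi>' x)" for t x :: real
  have fub: "(\<integral>x. (\<integral>t. F t x \<partial>lborel) \<partial>lborel) = (\<integral>t. (\<integral>x. F t x \<partial>lborel) \<partial>lborel)"
    using integrable_lower_triangle_kernel[OF hint cphi'] unfolding F_def
    by (rule lborel_pair.Fubini_integral)
  have inner1: "(\<integral>t. F t x \<partial>lborel) = indicator {0<..<1} x * (LBINT t=(0::real)..x. h t) * \<phi>' x" for x
  proof (cases "x \<in> {0<..<1}")
    case True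
    have "(\<integral>t. F t x \<partial>lborel) = (\<integral>t. (indicator {0<..<1} x * \<phi>' x) * ((if t < x then 1 else 0) * h t) \<partial>lborel)"
      by (intro Bochner_Integration.integral_cong) (auto simp: F_def)
    also have "\<dots> = (indicator {0<..<1} x * \<phi>' x) * (\<integral>t. (if t < x then 1 else 0) * h t \<partial>lborel)"
      by (rule integral_mult_right_zero)
    also have "(\<integral>t. (if t < x then 1 else 0) * h t \<partial>lborel) = (LBINT t=(0::real)..x. h t)"
      using True by (intro interval_integral_0_eq_integral[symmetric]) (auto simp: hz)
    finally show ?thesis by simp
  qed (simp add: F_def)
  have inner2: "(\<integral>x. F t x \<partial>lborel) = - (h t * \<phi> t)" for t
  proof (cases "t \<in> {0<..<1}")
    case True
    have "(\<integral>x. F t x \<partial>lborel) = (\<integral>x. h t * (indicator {t<..<1} x * \<phi>' x) \<partial>lborel)"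
      using True by (intro Bochner_Integration.integral_cong) (auto simp: F_def split: split_indicator)
    also have "\<dots> = h t * (LBINT x=t..(1::real). \<phi>' x)"
      using True by (simp add: interval_lebesgue_integral_def set_lebesgue_integral_def)
    also have "(LBINT x=t..(1::real). \<phi>' x) = \<phi> 1 - \<phi> t"
    proof (rule interval_integral_FTC_finite)
      show "continuous_on {min t 1..max t 1} \<phi>'" by (intro continuous_at_imp_continuous_on ballI cphi')
      show "(\<phi> has_vector_derivative \<phi>' x) (at x within {min t 1..max t 1})" for x
        using dphi[of x] by (simp add: has_real_derivative_iff_has_vector_derivative has_vector_derivative_at_within)
    qed
    finally show ?thesis using phi1 by simp
  qed (simp add: F_def hz)
  show ?thesis using fub unfolding inner1 inner2 by simp
qed

lemma L2_01_measurable: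
  assumes "L2_01 f"
  shows "(\<lambda>x. indicator {0<..<1::real} x * f x) \<in> borel_measurable lborel"
  using assms unfolding L2_01_def set_borel_measurable_def by simp

lemma L2_01_square_integrable:
  assumes "L2_01 f"
  shows "integrable lborel (\<lambda>x. indicator {0<..<1::real} x * (f x)\<^sup>2)"
  using assms unfolding L2_01_def set_integrable_def by simp

lemma L2_01_integrable:
  assumes "L2_01 f"
  shows "integrable lborel (\<lambda>x. indicator {0<..<1::real} x * f x)"
proof (rule Bochner_Integration.integrable_bound)
  show "integrable lborel (\<lambda>x. indicator {0<..<1::real} x + indicator {0<..<1::real} x * (f x)\<^sup>2)"
    by (intro Bochner_Integration.integrable_add L2_01_square_integrable[OF assms] integrable_real_indicator) auto
  show "(\<lambda>x. indicator {0<..<1::real} x * f x) \<in> borel_measurable lborel" by (rule L2_01_measurable[OF assms])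
  show "AE x in lborel. norm (indicator {0<..<1::real} x * f x) \<le> norm (indicator {0<..<1::real} x + indicator {0<..<1::real} x * (f x)\<^sup>2)"
  proof (intro AE_I2)
    fix x
    have "0 \<le> (\<bar>f x\<bar> - 1)\<^sup>2" by simp
    hence "2*\<bar>f x\<bar> \<le> \<bar>f x\<bar>\<^sup>2 + 1" by (simp add: power2_eq_square algebra_simps)
    hence "\<bar>f x\<bar> \<le> 1 + (f x)\<^sup>2" using zero_le_power2[of "f x"] by (simp add: power2_abs)
    then show "norm (indicator {0<..<1::real} x * f x) \<le> norm (indicator {0<..<1::real} x + indicator {0<..<1::real} x * (f x)\<^sup>2)"
      by (auto split: split_indicator)
  qed
qed

definition primitive :: "(real \<Rightarrow> real) \<Rightarrow> real \<Rightarrow> real" where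
  "primitive h x = (\<integral>t. (if t < x then h t else 0) \<partial>lborel)"

lemma borel_measurable_primitive[measurable]:
  assumes [measurable]: "h \<in> borel_measurable borel"
  shows "primitive h \<in> borel_measurable borel"
  unfolding primitive_def[abs_def] by measurable

lemma integrable_cut_above:
  assumes "integrable lborel (h::real\<Rightarrow>real)"
  shows "integrable lborel (\<lambda>t. if t < x then h t else 0)"
proof -
  have "integrable lborel (\<lambda>t. indicator {..<x} t * h t)"
    using integrable_mult_indicator[OF _ assms, of "{..<x}"] by simp
  moreover have "(\<lambda>t. indicator {..<x} t * h t) = (\<lambda>t. if t < x then h t else 0)"
    by (auto split: split_indicator)
  ultimately show ?thesis by simp
qed

lemma abs_primitive_le:
  assumes "integrable lborel h"
  shows "\<bar>primitive h x\<bar> \<le> (\<integral>t. \<bar>h t\<bar> \<partial>lborel)"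
proof -
  have "\<bar>primitive h x\<bar> \<le> (\<integral>t. norm (if t < x then h t else 0) \<partial>lborel)"
    unfolding primitive_def using integral_norm_bound by (metis real_norm_def)
  also have "\<dots> \<le> (\<integral>t. \<bar>h t\<bar> \<partial>lborel)"
    using assms integrable_cut_above[OF assms, of x]
    by (intro integral_mono) auto
  finally show ?thesis .
qed

lemma primitive_eq_interval_integral:
  assumes "\<And>t. t \<le> 0 \<Longrightarrow> h t = 0" "0 \<le> x"
  shows "primitive h x = (LBINT t=(0::real)..x. h t)"
proof -
  have "primitive h x = (\<integral>t. (if t < x then 1 else 0) * h t \<partial>lborel)"
    unfolding primitive_def by (intro Bochner_Integration.integral_cong) auto
  then show ?thesis using interval_integral_0_eq_integral[OF assms] by simp
qed

lemma integrable_mult_isCont_on_01: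
  fixes f \<tau> :: "real \<Rightarrow> real"
  assumes f: "integrable lborel f" and f0: "\<And>x. x \<notin> {0<..<1} \<Longrightarrow> f x = 0"
    and \<tau>: "\<And>x. isCont \<tau> x"
  shows "integrable lborel (\<lambda>x. f x * \<tau> x)"
proof -
  obtain K where K: "K \<ge> 0" "\<And>x. x \<in> {0..1} \<Longrightarrow> \<bar>\<tau> x\<bar> \<le> K"
    using isCont_bounded_on_01[OF \<tau>] by blast
  have [measurable]: "f \<in> borel_measurable borel" "\<tau> \<in> borel_measurable borel"
    using f by (auto intro!: borel_measurable_continuous_onI continuous_at_imp_continuous_on \<tau>)
  have "\<bar>f x * \<tau> x\<bar> \<le> K * \<bar>f x\<bar>" for x
  proof (cases "x \<in> {0<..<1}")
    case True
    then have "\<bar>\<tau> x\<bar> * \<bar>f x\<bar> \<le> K * \<bar>f x\<bar>" using K by (intro mult_right_mono) auto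
    then show ?thesis by (simp add: abs_mult mult.commute)
  qed (simp add: f0)
  then have "AE x in lborel. norm (f x * \<tau> x) \<le> norm (K * \<bar>f x\<bar>)"
    using K(1) by (intro AE_I2) (simp add: abs_mult)
  then show ?thesis
    by (rule Bochner_Integration.integrable_bound[OF integrable_mult_right[OF integrable_abs[OF f]], rotated])
       measurable
qed

lemma integrable_indicator_mult_primitive:
  assumes "integrable lborel h"
  shows "integrable lborel (\<lambda>x. indicator {0<..<1::real} x * primitive h x)"
  using assms
  by (intro integrable_mult_bounded[OF integrable_real_indicator, of _ _ "\<integral>t. \<bar>h t\<bar> \<partial>lborel"])
     (auto intro: abs_primitive_le)

text \<open>Integration by parts against the antiderivative of \<tau>, which is a test function.\<close>
lemma weak_derivative_orthogonal:
  assumes W: "W12_01 m g" and \<tau>: "zero_mean_test \<tau>"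
  shows "(\<integral>x. indicator {0<..<1} x * (m x - primitive (\<lambda>x. indicator {0<..<1} x * g x) x) * \<tau> x \<partial>lborel) = 0"
proof -
  define g1 where "g1 = (\<lambda>x. indicator {0<..<1::real} x * g x)"
  define \<phi> where "\<phi> = (\<lambda>x::real. LBINT t=(0::real)..x. \<tau> t)"
  note \<phi> = zero_mean_test_antiderivative[OF \<tau>, folded \<phi>_def]
  have \<phi>1: "\<phi> 1 = 0" using \<phi>(3) by (simp add: \<phi>_def)
  have ct: "\<And>x. isCont \<tau> x"
    using \<tau> infinitely_differentiable_imp_isCont unfolding zero_mean_test_def by blast
  have Lm: "L2_01 m" and Lg: "L2_01 g" using W by (auto simp: W12_01_def)
  have g1int: "integrable lborel g1" using L2_01_integrable[OF Lg] by (simp add: g1_def)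
  have g1z: "\<And>t. t \<notin> {0<..<1} \<Longrightarrow> g1 t = 0" by (simp add: g1_def)
  have weak: "(LINT x:{0<..<1}|lborel. m x * deriv \<phi> x) = - (LINT x:{0<..<1}|lborel. g x * \<phi> x)"
    using W \<phi>(1) by (auto simp: W12_01_def)
  have "deriv \<phi> = \<tau>" using \<phi>(2) DERIV_imp_deriv by blast
  then have e1: "(LINT x:{0<..<1}|lborel. m x * deriv \<phi> x) = (\<integral>x. indicator {0<..<1} x * m x * \<tau> x \<partial>lborel)"
    by (simp add: set_lebesgue_integral_def mult.assoc)
  have e2: "(LINT x:{0<..<1}|lborel. g x * \<phi> x) = - (\<integral>x. indicator {0<..<1} x * primitive g1 x * \<tau> x \<partial>lborel)"
  proof -
    have "(\<integral>x. indicator {0<..<1} x * primitive g1 x * \<tau> x \<partial>lborel)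
        = (\<integral>x. indicator {0<..<1} x * (LBINT t=(0::real)..x. g1 t) * \<tau> x \<partial>lborel)"
      by (intro Bochner_Integration.integral_cong refl)
         (auto simp: primitive_eq_interval_integral g1z split: split_indicator)
    also have "\<dots> = - (\<integral>t. g1 t * \<phi> t \<partial>lborel)"
      by (rule integral_primitive_mult_deriv[OF g1int g1z \<phi>(2) ct \<phi>1])
    finally show ?thesis by (simp add: set_lebesgue_integral_def g1_def mult.assoc)
  qed
  have i1: "integrable lborel (\<lambda>x. indicator {0<..<1} x * m x * \<tau> x)"
    by (rule integrable_mult_isCont_on_01[OF L2_01_integrable[OF Lm] _ ct]) simp
  have i2: "integrable lborel (\<lambda>x. indicator {0<..<1} x * primitive g1 x * \<tau> x)"
    by (rule integrable_mult_isCont_on_01[OF integrable_indicator_mult_primitive[OF g1int] _ ct]) simp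
  have "(\<integral>x. indicator {0<..<1} x * (m x - primitive g1 x) * \<tau> x \<partial>lborel)
     = (\<integral>x. indicator {0<..<1} x * m x * \<tau> x - indicator {0<..<1} x * primitive g1 x * \<tau> x \<partial>lborel)"
    by (simp add: algebra_simps)
  also have "\<dots> = 0"
    using i1 i2 weak e1 e2 by simp
  finally show ?thesis by (simp add: g1_def)
qed

lemma W12_01_representation:
  assumes W: "W12_01 m g"
  shows "\<exists>C. AE x in lborel. x \<in> {0<..<1} \<longrightarrow> m x = C + primitive (\<lambda>t. indicator {0<..<1} t * g t) x"
proof -
  define w where "w x = indicator {0<..<1::real} x * (m x - primitive (\<lambda>t. indicator {0<..<1} t * g t) x)" for x
  have Lm: "L2_01 m" and Lg: "L2_01 g" using W by (auto simp: W12_01_def)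
  have "integrable lborel w"
    unfolding w_def right_diff_distrib
    using L2_01_integrable[OF Lg] L2_01_integrable[OF Lm]
    by (intro Bochner_Integration.integrable_diff integrable_indicator_mult_primitive) auto
  moreover have "\<And>x. x \<notin> {0<..<1} \<Longrightarrow> w x = 0" by (simp add: w_def)
  moreover have "(\<integral>x. w x * \<tau> x \<partial>lborel) = 0" if "zero_mean_test \<tau>" for \<tau>
    using weak_derivative_orthogonal[OF W that] by (simp add: w_def)
  ultimately obtain C where "AE x in lborel. x \<in> {0<..<1} \<longrightarrow> w x = C"
    using du_Bois_Reymond by blast
  then have "AE x in lborel. x \<in> {0<..<1} \<longrightarrow> m x = C + primitive (\<lambda>t. indicator {0<..<1} t * g t) x"
    by eventually_elim (auto simp: w_def)
  then show ?thesis by blast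
qed

section \<open>Estimates for the exponential of a primitive\<close>

lemma integral_abs_mult_le_sqrt:
  fixes f g :: "'a \<Rightarrow> real"
  assumes [measurable]: "f \<in> borel_measurable M" "g \<in> borel_measurable M"
    and f2: "integrable M (\<lambda>x. (f x)\<^sup>2)" and g2: "integrable M (\<lambda>x. (g x)\<^sup>2)"
  shows "integrable M (\<lambda>x. \<bar>f x * g x\<bar>)"
    and "(\<integral>x. \<bar>f x * g x\<bar> \<partial>M) \<le> sqrt (\<integral>x. (f x)\<^sup>2 \<partial>M) * sqrt (\<integral>x. (g x)\<^sup>2 \<partial>M)"
proof -
  have bound: "\<bar>f x * g x\<bar> \<le> ((f x)\<^sup>2 + (g x)\<^sup>2) / 2" for x
    using sum_squares_bound[of "\<bar>f x\<bar>" "\<bar>g x\<bar>"] by (simp add: abs_mult power2_abs)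
  have "integrable M (\<lambda>x. ((f x)\<^sup>2 + (g x)\<^sup>2) / 2)"
    using f2 g2 by simp
  then show fg: "integrable M (\<lambda>x. \<bar>f x * g x\<bar>)"
    by (rule Bochner_Integration.integrable_bound) (use bound in \<open>auto intro!: AE_I2\<close>)
  have "(\<integral>\<^sup>+x. ennreal \<bar>f x\<bar> * ennreal \<bar>g x\<bar> \<partial>M)\<^sup>2
      \<le> (\<integral>\<^sup>+x. ennreal \<bar>f x\<bar> ^ 2 \<partial>M) * (\<integral>\<^sup>+x. ennreal \<bar>g x\<bar> ^ 2 \<partial>M)"
    by (rule Cauchy_Schwarz_nn_integral) auto
  also have "(\<integral>\<^sup>+x. ennreal \<bar>f x\<bar> * ennreal \<bar>g x\<bar> \<partial>M) = ennreal (\<integral>x. \<bar>f x * g x\<bar> \<partial>M)"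
    by (subst nn_integral_eq_integral[OF fg, symmetric]) (auto simp: abs_mult ennreal_mult)
  also have "(\<integral>\<^sup>+x. ennreal \<bar>f x\<bar> ^ 2 \<partial>M) = ennreal (\<integral>x. (f x)\<^sup>2 \<partial>M)"
    by (subst nn_integral_eq_integral[OF f2, symmetric]) (auto simp: ennreal_power)
  also have "(\<integral>\<^sup>+x. ennreal \<bar>g x\<bar> ^ 2 \<partial>M) = ennreal (\<integral>x. (g x)\<^sup>2 \<partial>M)"
    by (subst nn_integral_eq_integral[OF g2, symmetric]) (auto simp: ennreal_power)
  finally have "ennreal ((\<integral>x. \<bar>f x * g x\<bar> \<partial>M)\<^sup>2) \<le> ennreal ((\<integral>x. (f x)\<^sup>2 \<partial>M) * (\<integral>x. (g x)\<^sup>2 \<partial>M))"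
    by (simp add: ennreal_power ennreal_mult[symmetric] integral_nonneg_AE)
  then have "(\<integral>x. \<bar>f x * g x\<bar> \<partial>M)\<^sup>2 \<le> (\<integral>x. (f x)\<^sup>2 \<partial>M) * (\<integral>x. (g x)\<^sup>2 \<partial>M)"
    by (simp add: ennreal_le_iff integral_nonneg_AE)
  then show "(\<integral>x. \<bar>f x * g x\<bar> \<partial>M) \<le> sqrt (\<integral>x. (f x)\<^sup>2 \<partial>M) * sqrt (\<integral>x. (g x)\<^sup>2 \<partial>M)"
    by (metis real_le_rsqrt real_sqrt_mult)
qed

lemma set_integrable_if_integrable:
  "integrable lborel f \<Longrightarrow> A \<in> sets borel \<Longrightarrow> set_integrable lborel A (f :: real \<Rightarrow> real)"
  unfolding set_integrable_def by (rule integrable_mult_indicator) auto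

lemma set_integral_Ico_add:
  fixes f :: "real \<Rightarrow> real"
  assumes "integrable lborel f" "r \<le> s" "s \<le> t"
  shows "(LINT x:{r..<s}|lborel. f x) + (LINT x:{s..<t}|lborel. f x) = (LINT x:{r..<t}|lborel. f x)"
proof -
  have "{r..<t} = {r..<s} \<union> {s..<t}" using assms by auto
  then show ?thesis
    using assms by (simp add: set_integral_Un set_integrable_if_integrable ivl_disj_int_two(3))
qed

lemma primitive_diff:
  assumes "integrable lborel f" "s \<le> t"
  shows "primitive f t - primitive f s = (LINT x:{s..<t}|lborel. f x)"
proof -
  have "primitive f t - primitive f s = (\<integral>x. (if x < t then f x else 0) - (if x < s then f x else 0) \<partial>lborel)"
    unfolding primitive_def
    by (rule Bochner_Integration.integral_diff[OF integrable_cut_above[OF assms(1)] integrable_cut_above[OF assms(1)], symmetric])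
  also have "\<dots> = (LINT x:{s..<t}|lborel. f x)"
    unfolding set_lebesgue_integral_def using assms(2)
    by (intro Bochner_Integration.integral_cong) (auto split: split_indicator)
  finally show ?thesis .
qed

lemma abs_primitive_diff_le_sqrt:
  fixes h :: "real \<Rightarrow> real"
  assumes h: "integrable lborel h" and h2: "integrable lborel (\<lambda>x. (h x)\<^sup>2)" and st: "s \<le> t"
  shows "\<bar>primitive h t - primitive h s\<bar> \<le> sqrt (\<integral>x. (h x)\<^sup>2 \<partial>lborel) * sqrt (t - s)"
proof -
  have [measurable]: "h \<in> borel_measurable borel" using h by auto
  have ind: "(\<lambda>x. (indicator {s..<t} x :: real)\<^sup>2) = indicator {s..<t}"
    by (auto split: split_indicator)
  have "\<bar>primitive h t - primitive h s\<bar> = \<bar>\<integral>x. indicator {s..<t} x * h x \<partial>lborel\<bar>"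
    using primitive_diff[OF h st] by (simp add: set_lebesgue_integral_def)
  also have "\<dots> \<le> (\<integral>x. \<bar>indicator {s..<t} x * h x\<bar> \<partial>lborel)"
    using integral_norm_bound[of lborel "\<lambda>x. indicator {s..<t} x * h x"] by simp
  also have "\<dots> \<le> sqrt (\<integral>x. (indicator {s..<t} x :: real)\<^sup>2 \<partial>lborel) * sqrt (\<integral>x. (h x)\<^sup>2 \<partial>lborel)"
  proof (rule integral_abs_mult_le_sqrt(2))
    show "integrable lborel (\<lambda>x. (indicator {s..<t} x :: real)\<^sup>2)"
      unfolding ind using st by simp
  qed (simp_all add: h2)
  also have "(\<integral>x. (indicator {s..<t} x :: real)\<^sup>2 \<partial>lborel) = t - s"
    unfolding ind using st by simp
  finally show ?thesis by (simp add: mult.commute)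
qed

lemma abs_diff_le_if_local_bound:
  fixes F :: "real \<Rightarrow> real" and \<Phi> :: "real \<Rightarrow> real \<Rightarrow> real"
  assumes add: "\<And>a b c. a \<le> b \<Longrightarrow> b \<le> c \<Longrightarrow> \<Phi> a b + \<Phi> b c = \<Phi> a c"
    and \<eta>: "\<eta> > 0" and local: "\<And>a b. a \<le> b \<Longrightarrow> b - a \<le> \<eta> \<Longrightarrow> \<bar>F b - F a\<bar> \<le> \<Phi> a b"
    and st: "s \<le> t"
  shows "\<bar>F t - F s\<bar> \<le> \<Phi> s t"
proof -
  have "\<forall>a b. a \<le> b \<longrightarrow> b - a \<le> real n * \<eta> \<longrightarrow> \<bar>F b - F a\<bar> \<le> \<Phi> a b" for n
  proof (induction n)
    case 0
    have "b - a \<le> \<eta>" if "b - a \<le> real 0 * \<eta>" for a b :: real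
      using that \<eta> by simp
    then show ?case using local by blast
  next
    case (Suc n)
    show ?case
    proof (intro allI impI)
      fix a b assume ab: "a \<le> b" "b - a \<le> real (Suc n) * \<eta>"
      show "\<bar>F b - F a\<bar> \<le> \<Phi> a b"
      proof (cases "b - a \<le> \<eta>")
        case False
        define r where "r = a + \<eta>"
        have r: "a \<le> r" "r \<le> b" "r - a \<le> \<eta>" "b - r \<le> real n * \<eta>"
          using False ab \<eta> by (auto simp: r_def algebra_simps)
        have "\<bar>F b - F a\<bar> \<le> \<bar>F r - F a\<bar> + \<bar>F b - F r\<bar>" by simp
        also have "\<dots> \<le> \<Phi> a r + \<Phi> r b"
          using Suc.IH r local[of a r] by (intro add_mono) auto
        finally show ?thesis using add[OF r(1,2)] by simp
      qed (use local ab in auto)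
    qed
  qed
  moreover obtain n where "(t - s) / \<eta> \<le> real n" using real_arch_simple by blast
  then have "t - s \<le> real n * \<eta>" using \<eta> by (simp add: field_simps)
  ultimately show ?thesis using st by blast
qed

lemma le_if_le_exp_mult:
  fixes D X :: real
  assumes "\<And>\<delta>. \<delta> > 0 \<Longrightarrow> D \<le> exp \<delta> * X"
  shows "D \<le> X"
proof -
  have "((\<lambda>\<delta>. exp \<delta> * X) \<longlongrightarrow> exp 0 * X) (at_right 0)"
    by (intro tendsto_intros)
  then have "((\<lambda>\<delta>. exp \<delta> * X) \<longlongrightarrow> X) (at_right 0)"
    by simp
  then show ?thesis
    by (rule tendsto_lowerbound) (auto intro!: eventually_at_rightI[of 0 1] assms)
qed

lemma abs_exp_diff_le: "\<bar>exp x - exp y\<bar> \<le> \<bar>x - y\<bar> * exp (max x y)" for x y :: real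
proof -
  have *: "exp x - exp y \<le> (x - y) * exp x" if "y \<le> x" for x y :: real
  proof -
    have "exp x * (1 + (y - x)) \<le> exp x * exp (y - x)"
      by (intro mult_left_mono exp_ge_add_one_self) auto
    then show ?thesis by (simp add: exp_diff algebra_simps)
  qed
  show ?thesis
    using *[of y x] *[of x y] by (cases "y \<le> x") (auto simp: max_def abs_minus_commute)
qed

lemma set_integrable_01_if_bounded:
  fixes f :: "real \<Rightarrow> real"
  assumes "f \<in> borel_measurable borel" "\<And>x. \<bar>f x\<bar> \<le> B"
  shows "set_integrable lborel {0<..<1} f"
  using integrable_mult_bounded[OF integrable_real_indicator[of "{0<..<1::real}"] assms]
  by (simp add: set_integrable_def)

text \<open>
  The chain rule for exp((C + primitive h) / 2) over a short interval, where the primitive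
  oscillates by at most 2 \<delta>: the factor exp \<delta> absorbs the oscillation of the exponential.
\<close>
lemma abs_exp_half_primitive_diff_le_local:
  fixes h :: "real \<Rightarrow> real" and C :: real
  defines "q \<equiv> \<lambda>x. exp ((C + primitive h x) / 2)"
  assumes h: "integrable lborel h" and hq: "integrable lborel (\<lambda>x. \<bar>h x\<bar> * q x / 2)"
    and ab: "a \<le> b" and osc: "\<And>x y. x \<in> {a..b} \<Longrightarrow> y \<in> {a..b} \<Longrightarrow> \<bar>primitive h y - primitive h x\<bar> \<le> 2 * \<delta>"
  shows "\<bar>q b - q a\<bar> \<le> exp \<delta> * (LINT x:{a..<b}|lborel. \<bar>h x\<bar> * q x / 2)"
proof -
  define E where "E = exp (max ((C + primitive h b) / 2) ((C + primitive h a) / 2))"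
  have E: "E \<le> exp \<delta> * q x" if "x \<in> {a..<b}" for x
  proof -
    have "max ((C + primitive h b) / 2) ((C + primitive h a) / 2) \<le> (C + primitive h x) / 2 + \<delta>"
      using osc[of x a] osc[of x b] that ab by (auto simp: abs_le_iff max_def field_simps)
    then show ?thesis by (simp add: E_def q_def mult_exp_exp add.commute)
  qed
  have pt: "E / 2 * \<bar>h x\<bar> \<le> exp \<delta> * (\<bar>h x\<bar> * q x / 2)" if "x \<in> {a..<b}" for x
  proof -
    have "\<bar>h x\<bar> * E \<le> \<bar>h x\<bar> * (exp \<delta> * q x)" using E[OF that] by (rule mult_left_mono) simp
    then show ?thesis by (simp add: algebra_simps)
  qed
  have int_abs: "\<bar>LINT x:{a..<b}|lborel. h x\<bar> \<le> (LINT x:{a..<b}|lborel. \<bar>h x\<bar>)"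
    using integral_norm_bound[of lborel "\<lambda>x. indicator {a..<b} x * h x"]
    by (simp add: set_lebesgue_integral_def abs_mult)
  have "\<bar>q b - q a\<bar> \<le> \<bar>(C + primitive h b) / 2 - (C + primitive h a) / 2\<bar> * E"
    unfolding q_def E_def by (rule abs_exp_diff_le)
  also have "\<dots> = \<bar>LINT x:{a..<b}|lborel. h x\<bar> / 2 * E"
  proof -
    have diff: "(C + primitive h b) / 2 - (C + primitive h a) / 2 = (LINT x:{a..<b}|lborel. h x) / 2"
      using primitive_diff[OF h ab] by (simp add: field_simps)
    show ?thesis unfolding diff by simp
  qed
  also have "\<dots> \<le> (LINT x:{a..<b}|lborel. \<bar>h x\<bar>) / 2 * E"
    using int_abs by (intro mult_right_mono divide_right_mono) (auto simp: E_def)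
  also have "\<dots> = (LINT x:{a..<b}|lborel. E / 2 * \<bar>h x\<bar>)"
    by simp
  also have "\<dots> \<le> (LINT x:{a..<b}|lborel. exp \<delta> * (\<bar>h x\<bar> * q x / 2))"
    using h hq by (intro set_integral_mono set_integrable_if_integrable pt integrable_mult_right integrable_abs) auto
  also have "\<dots> = exp \<delta> * (LINT x:{a..<b}|lborel. \<bar>h x\<bar> * q x / 2)"
    by simp
  finally show ?thesis .
qed

lemma abs_exp_half_primitive_diff_le:
  fixes h :: "real \<Rightarrow> real" and C :: real
  defines "q \<equiv> \<lambda>x. exp ((C + primitive h x) / 2)"
  assumes h: "integrable lborel h" and h2: "integrable lborel (\<lambda>x. (h x)\<^sup>2)" and st: "s \<le> t"
  shows "\<bar>q t - q s\<bar> \<le> (LINT x:{s..<t}|lborel. \<bar>h x\<bar> * q x / 2)"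
proof -
  define G where "G = (\<integral>x. (h x)\<^sup>2 \<partial>lborel)"
  have [measurable]: "h \<in> borel_measurable borel" using h by auto
  have "G \<ge> 0" unfolding G_def by (intro integral_nonneg_AE) auto
  have bound: "\<bar>q x / 2\<bar> \<le> exp ((\<bar>C\<bar> + (\<integral>t. \<bar>h t\<bar> \<partial>lborel)) / 2)" for x
  proof -
    have "(C + primitive h x) / 2 \<le> (\<bar>C\<bar> + (\<integral>t. \<bar>h t\<bar> \<partial>lborel)) / 2"
      using abs_primitive_le[OF h, of x] by (auto simp: abs_le_iff)
    then have "q x \<le> exp ((\<bar>C\<bar> + (\<integral>t. \<bar>h t\<bar> \<partial>lborel)) / 2)" "q x > 0"
      by (simp_all add: q_def)
    then show ?thesis by (auto simp: abs_of_pos)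
  qed
  have "(\<lambda>x. q x / 2) \<in> borel_measurable borel"
    unfolding q_def by measurable
  from integrable_mult_bounded[OF integrable_abs[OF h] this bound]
  have hq: "integrable lborel (\<lambda>x. \<bar>h x\<bar> * q x / 2)"
    by simp
  have "\<bar>q t - q s\<bar> \<le> exp \<delta> * (LINT x:{s..<t}|lborel. \<bar>h x\<bar> * q x / 2)" if \<delta>: "\<delta> > 0" for \<delta>
  proof (rule abs_diff_le_if_local_bound[where \<eta>="4 * \<delta>\<^sup>2 / (G + 1)"])
    show "exp \<delta> * (LINT x:{a..<b}|lborel. \<bar>h x\<bar> * q x / 2) + exp \<delta> * (LINT x:{b..<c}|lborel. \<bar>h x\<bar> * q x / 2)
        = exp \<delta> * (LINT x:{a..<c}|lborel. \<bar>h x\<bar> * q x / 2)" if "a \<le> b" "b \<le> c" for a b c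
      by (simp only: distrib_left[symmetric] set_integral_Ico_add[OF hq that])
    show "4 * \<delta>\<^sup>2 / (G + 1) > 0" using \<open>G \<ge> 0\<close> \<delta> by simp
    show "\<bar>q b - q a\<bar> \<le> exp \<delta> * (LINT x:{a..<b}|lborel. \<bar>h x\<bar> * q x / 2)"
      if ab: "a \<le> b" "b - a \<le> 4 * \<delta>\<^sup>2 / (G + 1)" for a b
      unfolding q_def
    proof (rule abs_exp_half_primitive_diff_le_local[OF h hq[unfolded q_def] ab(1)])
      fix x y assume xy: "x \<in> {a..b}" "y \<in> {a..b}"
      have "\<bar>primitive h y - primitive h x\<bar> \<le> sqrt G * sqrt \<bar>y - x\<bar>"
        using abs_primitive_diff_le_sqrt[OF h h2, of x y] abs_primitive_diff_le_sqrt[OF h h2, of y x]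
        by (cases "x \<le> y") (auto simp: G_def abs_minus_commute)
      also have "\<dots> \<le> sqrt G * sqrt (4 * \<delta>\<^sup>2 / (G + 1))"
        using xy ab \<open>G \<ge> 0\<close> by (intro mult_left_mono real_sqrt_le_mono) auto
      also have "\<dots> = 2 * \<delta> * sqrt (G / (G + 1))"
        using \<delta> \<open>G \<ge> 0\<close> by (simp add: real_sqrt_mult real_sqrt_divide field_simps)
      also have "\<dots> \<le> 2 * \<delta>"
        using \<delta> \<open>G \<ge> 0\<close> by (intro mult_left_le) auto
      finally show "\<bar>primitive h y - primitive h x\<bar> \<le> 2 * \<delta>" .
    qed
  qed (use st in auto)
  then show ?thesis
    by (rule le_if_le_exp_mult)
qed

lemma le_sqrt_set_integral_square:
  fixes f :: "real \<Rightarrow> real"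
  assumes f2: "set_integrable lborel {0<..<1} (\<lambda>y. (f y)\<^sup>2)" and a: "0 \<le> a"
    and le: "\<And>y. y \<in> {0<..<1} \<Longrightarrow> a \<le> f y"
  shows "a \<le> sqrt (LINT y:{0<..<1}|lborel. (f y)\<^sup>2)"
proof -
  have "a\<^sup>2 = (LINT y:{0<..<1::real}|lborel. a\<^sup>2)"
    by (simp add: set_lebesgue_integral_def)
  also have "\<dots> \<le> (LINT y:{0<..<1}|lborel. (f y)\<^sup>2)"
    using a le by (intro set_integral_mono f2 power_mono) (auto simp: set_integrable_def)
  finally show ?thesis by (rule real_le_rsqrt)
qed

lemma set_integrable_exp_mult_primitive:
  fixes h :: "real \<Rightarrow> real"
  assumes h: "integrable lborel h" and k: "k \<ge> 0"
  shows "set_integrable lborel {0<..<1} (\<lambda>x. exp (k * (C + primitive h x)))"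
proof (rule set_integrable_01_if_bounded)
  have [measurable]: "h \<in> borel_measurable borel" using h by auto
  show "(\<lambda>x. exp (k * (C + primitive h x))) \<in> borel_measurable borel" by measurable
  fix x
  have "k * (C + primitive h x) \<le> k * (\<bar>C\<bar> + (\<integral>t. \<bar>h t\<bar> \<partial>lborel))"
    using abs_primitive_le[OF h, of x] k by (intro mult_left_mono) (auto simp: abs_le_iff)
  then show "\<bar>exp (k * (C + primitive h x))\<bar> \<le> exp (k * (\<bar>C\<bar> + (\<integral>t. \<bar>h t\<bar> \<partial>lborel)))" by simp
qed

lemma integral_abs_mult_exp_half_primitive_le:
  fixes h :: "real \<Rightarrow> real" and C :: real
  defines "q \<equiv> \<lambda>t. exp ((C + primitive h t) / 2)"
  assumes h: "integrable lborel h" and h2: "integrable lborel (\<lambda>x. (h x)\<^sup>2)"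
    and h0: "\<And>x. x \<notin> {0<..<1} \<Longrightarrow> h x = 0"
  shows "integrable lborel (\<lambda>t. \<bar>h t\<bar> * q t / 2)"
    and "(\<integral>t. \<bar>h t\<bar> * q t / 2 \<partial>lborel)
      \<le> sqrt (\<integral>t. (h t)\<^sup>2 \<partial>lborel) * sqrt (LINT t:{0<..<1}|lborel. exp (C + primitive h t)) / 2"
proof -
  have [measurable]: "h \<in> borel_measurable borel" "q \<in> borel_measurable borel"
    using h unfolding q_def by auto
  have q_pos: "q t > 0" for t by (simp add: q_def)
  have ind_q: "(\<lambda>t. (indicator {0<..<1::real} t * q t)\<^sup>2) = (\<lambda>t. indicator {0<..<1} t * exp (C + primitive h t))"
    by (auto simp: q_def power2_eq_square split: split_indicator simp flip: exp_add)
  have iq2: "integrable lborel (\<lambda>t. (indicator {0<..<1::real} t * q t)\<^sup>2)"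
    using set_integrable_exp_mult_primitive[OF h, of 1 C] unfolding ind_q set_integrable_def by simp
  have hq_eq: "(\<lambda>t. \<bar>h t * (indicator {0<..<1} t * q t)\<bar>) = (\<lambda>t. \<bar>h t\<bar> * q t)"
    by (rule ext) (simp add: abs_mult abs_of_pos[OF q_pos] h0 split: split_indicator)
  have "integrable lborel (\<lambda>t. \<bar>h t * (indicator {0<..<1} t * q t)\<bar>)"
    by (rule integral_abs_mult_le_sqrt(1)[OF _ _ h2 iq2]) measurable
  then show "integrable lborel (\<lambda>t. \<bar>h t\<bar> * q t / 2)"
    unfolding hq_eq by simp
  have "(\<integral>t. \<bar>h t * (indicator {0<..<1} t * q t)\<bar> \<partial>lborel)
      \<le> sqrt (\<integral>t. (h t)\<^sup>2 \<partial>lborel) * sqrt (LINT t:{0<..<1}|lborel. exp (C + primitive h t))"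
    using integral_abs_mult_le_sqrt(2)[OF _ _ h2 iq2] unfolding ind_q set_lebesgue_integral_def real_scaleR_def
    by measurable
  then show "(\<integral>t. \<bar>h t\<bar> * q t / 2 \<partial>lborel)
      \<le> sqrt (\<integral>t. (h t)\<^sup>2 \<partial>lborel) * sqrt (LINT t:{0<..<1}|lborel. exp (C + primitive h t)) / 2"
    unfolding hq_eq by simp
qed

lemma exp_primitive_le:
  fixes h :: "real \<Rightarrow> real" and C x :: real
  assumes h: "integrable lborel h" and h2: "integrable lborel (\<lambda>x. (h x)\<^sup>2)"
    and h0: "\<And>x. x \<notin> {0<..<1} \<Longrightarrow> h x = 0" and x: "x \<in> {0<..<1}"
  shows "exp (C + primitive h x)
    \<le> (LINT y:{0<..<1}|lborel. exp (C + primitive h y)) * (1 + sqrt (\<integral>y. (h y)\<^sup>2 \<partial>lborel) / 2)\<^sup>2"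
proof -
  define q where "q y = exp ((C + primitive h y) / 2)" for y
  define M where "M = (LINT y:{0<..<1}|lborel. exp (C + primitive h y))"
  define G where "G = (\<integral>y. (h y)\<^sup>2 \<partial>lborel)"
  define c where "c = sqrt G * sqrt M / 2"
  note hq = integral_abs_mult_exp_half_primitive_le[OF h h2 h0, of C, folded q_def M_def G_def c_def]
  have q_pos: "q y > 0" and q2: "(q y)\<^sup>2 = exp (C + primitive h y)" for y
    by (simp_all add: q_def power2_eq_square flip: exp_add)
  have "M \<ge> 0"
    unfolding M_def set_lebesgue_integral_def by (auto intro!: integral_nonneg_AE)
  have osc: "q x - c \<le> q y" if y: "y \<in> {0<..<1}" for y
  proof -
    have "\<bar>q (max x y) - q (min x y)\<bar> \<le> (LINT t:{min x y..<max x y}|lborel. \<bar>h t\<bar> * q t / 2)"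
      unfolding q_def by (rule abs_exp_half_primitive_diff_le[OF h h2]) simp
    also have "\<dots> \<le> (\<integral>t. \<bar>h t\<bar> * q t / 2 \<partial>lborel)"
      using hq(1) unfolding set_lebesgue_integral_def
      by (intro integral_mono integrable_mult_indicator) (auto simp: q_def split: split_indicator)
    finally have "\<bar>q (max x y) - q (min x y)\<bar> \<le> c" using hq(2) by linarith
    then show ?thesis by (cases "x \<le> y") (auto simp: max_def min_def abs_le_iff)
  qed
  have "q x - c \<le> sqrt M"
  proof (cases "q x - c \<ge> 0")
    case True
    have "set_integrable lborel {0<..<1} (\<lambda>y. (q y)\<^sup>2)"
      using set_integrable_exp_mult_primitive[OF h, of 1 C] by (simp add: q2)
    from le_sqrt_set_integral_square[OF this True osc] show ?thesis
      unfolding M_def q2 .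
  next
    case False
    then show ?thesis using real_sqrt_ge_zero[OF \<open>M \<ge> 0\<close>] by linarith
  qed
  then have "(q x)\<^sup>2 \<le> (sqrt M + c)\<^sup>2"
    using q_pos[of x] by (intro power_mono) auto
  also have "\<dots> = M * (1 + sqrt G / 2)\<^sup>2"
    using \<open>M \<ge> 0\<close> by (simp add: c_def power2_eq_square algebra_simps)
  finally show ?thesis by (simp add: q2 M_def G_def)
qed

lemma set_integral_exp_double_primitive_le:
  fixes h :: "real \<Rightarrow> real" and C :: real
  assumes h: "integrable lborel h" and h2: "integrable lborel (\<lambda>x. (h x)\<^sup>2)"
    and h0: "\<And>x. x \<notin> {0<..<1} \<Longrightarrow> h x = 0"
  shows "(LINT x:{0<..<1}|lborel. exp (2 * (C + primitive h x)))
    \<le> (LINT x:{0<..<1}|lborel. exp (C + primitive h x))\<^sup>2 * (1 + sqrt (\<integral>x. (h x)\<^sup>2 \<partial>lborel) / 2)\<^sup>2"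
proof -
  define M where "M = (LINT x:{0<..<1}|lborel. exp (C + primitive h x))"
  define K where "K = (1 + sqrt (\<integral>x. (h x)\<^sup>2 \<partial>lborel) / 2)\<^sup>2"
  have [measurable]: "h \<in> borel_measurable borel" using h by auto
  have int: "set_integrable lborel {0<..<1} (\<lambda>x. exp (C + primitive h x))"
    "set_integrable lborel {0<..<1} (\<lambda>x. exp (2 * (C + primitive h x)))"
    using set_integrable_exp_mult_primitive[OF h, of 1 C] set_integrable_exp_mult_primitive[OF h, of 2 C]
    by simp_all
  have "(LINT x:{0<..<1}|lborel. exp (2 * (C + primitive h x)))
      \<le> (LINT x:{0<..<1}|lborel. exp (C + primitive h x) * (M * K))"
  proof (rule set_integral_mono[OF int(2)])
    show "set_integrable lborel {0<..<1} (\<lambda>x. exp (C + primitive h x) * (M * K))"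
      by (rule set_integrable_mult_left) (rule int(1))
    fix x :: real assume "x \<in> {0<..<1}"
    have "exp (2 * (C + primitive h x)) = exp (C + primitive h x) * exp (C + primitive h x)"
      by (simp only: mult_2 exp_add)
    also have "\<dots> \<le> exp (C + primitive h x) * (M * K)"
      using exp_primitive_le[OF h h2 h0 \<open>x \<in> {0<..<1}\<close>] by (intro mult_left_mono) (auto simp: M_def K_def)
    finally show "exp (2 * (C + primitive h x)) \<le> exp (C + primitive h x) * (M * K)" .
  qed
  also have "\<dots> = M * (M * K)"
    unfolding M_def by (rule set_integral_mult_left)
  finally show ?thesis by (simp add: M_def K_def power2_eq_square mult.assoc)
qed

lemma square_one_plus_half_sqrt_le:
  fixes M G \<nu> :: real
  assumes "\<nu> > 0" "G \<ge> 0"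
  shows "M\<^sup>2 * (1 + sqrt G / 2)\<^sup>2 \<le> (1 + \<nu>) / 4 * M\<^sup>2 * G + (1 + 1 / \<nu>) * M\<^sup>2"
proof -
  have "0 \<le> (\<nu> * sqrt G / 2 - 1)\<^sup>2 / \<nu>" using assms by simp
  also have "\<dots> = \<nu> * G / 4 + 1 / \<nu> - sqrt G"
    using assms by (simp add: power2_eq_square field_simps)
  finally have "(1 + sqrt G / 2)\<^sup>2 \<le> (1 + \<nu>) / 4 * G + (1 + 1 / \<nu>)"
    using assms by (simp add: power2_eq_square field_simps)
  then have "M\<^sup>2 * (1 + sqrt G / 2)\<^sup>2 \<le> M\<^sup>2 * ((1 + \<nu>) / 4 * G + (1 + 1 / \<nu>))"
    by (rule mult_left_mono) simp
  then show ?thesis by (simp add: algebra_simps)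
qed

lemma set_integral_comp_cong_AE:
  fixes m u \<phi> :: "real \<Rightarrow> real"
  assumes m: "set_borel_measurable lborel A m" and A: "A \<in> sets borel"
    and [measurable]: "u \<in> borel_measurable borel" "\<phi> \<in> borel_measurable borel"
    and eq: "AE x in lborel. x \<in> A \<longrightarrow> m x = u x"
  shows "(LINT x:A|lborel. \<phi> (m x)) = (LINT x:A|lborel. \<phi> (u x))"
proof -
  have [measurable]: "(\<lambda>x. indicator A x * m x) \<in> borel_measurable borel"
    using m by (simp add: set_borel_measurable_def)
  have "(LINT x:A|lborel. \<phi> (m x)) = (LINT x:A|lborel. \<phi> (indicator A x * m x))"
    by (rule set_lebesgue_integral_cong) (use A in auto)
  also have "\<dots> = (LINT x:A|lborel. \<phi> (u x))"
  proof (rule set_lebesgue_integral_cong_AE)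
    show "AE x\<in>A in lborel. \<phi> (indicator A x * m x) = \<phi> (u x)"
      using eq by eventually_elim simp
  qed (use A in simp_all)
  finally show ?thesis .
qed

theorem proposition5:
  fixes m g :: "real \<Rightarrow> real" and \<nu> :: real
  assumes "W12_01 m g" and "\<nu> > 0"
  shows "(LINT x:{0<..<1}|lborel. exp (2 * m x))
     \<le> (1 + \<nu>) / 4 * (LINT x:{0<..<1}|lborel. exp (m x))\<^sup>2 * (LINT x:{0<..<1}|lborel. \<bar>g x\<bar>\<^sup>2)
       + (1 + 1 / \<nu>) * (LINT x:{0<..<1}|lborel. exp (m x))\<^sup>2"
proof -
  define h where "h = (\<lambda>x. indicator {0<..<1::real} x * g x)"
  obtain C where C: "AE x in lborel. x \<in> {0<..<1} \<longrightarrow> m x = C + primitive h x"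
    using W12_01_representation[OF assms(1)] unfolding h_def by blast
  have Lm: "L2_01 m" and Lg: "L2_01 g" using assms(1) by (auto simp: W12_01_def)
  have h: "integrable lborel h" using L2_01_integrable[OF Lg] by (simp add: h_def)
  have h_square: "(\<lambda>x. (h x)\<^sup>2) = (\<lambda>x. indicator {0<..<1::real} x * \<bar>g x\<bar>\<^sup>2)"
    by (auto simp: h_def split: split_indicator)
  have h2: "integrable lborel (\<lambda>x. (h x)\<^sup>2)" and h2_eq: "(\<integral>x. (h x)\<^sup>2 \<partial>lborel) = (LINT x:{0<..<1}|lborel. \<bar>g x\<bar>\<^sup>2)"
    using L2_01_square_integrable[OF Lg] by (simp_all add: h_square set_lebesgue_integral_def)
  have [measurable]: "h \<in> borel_measurable borel" using h by auto
  have h0: "\<And>x. x \<notin> {0<..<1} \<Longrightarrow> h x = 0" by (simp add: h_def)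
  have exp_m: "(LINT x:{0<..<1}|lborel. exp (k * m x)) = (LINT x:{0<..<1}|lborel. exp (k * (C + primitive h x)))"
    for k
    using Lm C unfolding L2_01_def by (intro set_integral_comp_cong_AE[where \<phi>="\<lambda>y. exp (k * y)"]) auto
  have M: "(LINT x:{0<..<1}|lborel. exp (C + primitive h x)) = (LINT x:{0<..<1}|lborel. exp (m x))"
    using exp_m[of 1] by simp
  have "(LINT x:{0<..<1}|lborel. exp (2 * m x)) = (LINT x:{0<..<1}|lborel. exp (2 * (C + primitive h x)))"
    by (rule exp_m)
  also have "\<dots> \<le> (LINT x:{0<..<1}|lborel. exp (C + primitive h x))\<^sup>2 * (1 + sqrt (\<integral>x. (h x)\<^sup>2 \<partial>lborel) / 2)\<^sup>2"
    by (rule set_integral_exp_double_primitive_le[OF h h2 h0])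
  also have "\<dots> \<le> (1 + \<nu>) / 4 * (LINT x:{0<..<1}|lborel. exp (C + primitive h x))\<^sup>2 * (\<integral>x. (h x)\<^sup>2 \<partial>lborel)
      + (1 + 1 / \<nu>) * (LINT x:{0<..<1}|lborel. exp (C + primitive h x))\<^sup>2"
    by (rule square_one_plus_half_sqrt_le[OF assms(2)]) (simp add: integral_nonneg_AE)
  finally show ?thesis unfolding M h2_eq .
qed

end
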